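(* Every $GF(2)$-chordal matroid is a chordal matroid.
   Context: All matroids are simple. For matroids $M_1,M_2$ whose ground sets meet in a set $T$ that is a modular flat of $M_1$ with $M_1|T=M_2|T=N$, the generalized parallel connection $P_N(M_1,M_2)$ is the matroid on $E(M_1)\cup E(M_2)$ whose flats are the sets $Z$ with $Z\cap E(M_i)$ a flat of $M_i$ for $i=1,2$ (if $T=\emptyset$ this is $M_1\oplus M_2$). A matroid is $GF(2)$-chordal if it can be built from binary projective geometries by a sequence of generalized parallel connections across binary projective geometries. A matroid $M$ is chordal if, for each circuit $C$ of $M$ with at least four elements, there are circuits $C_1$ and $C_2$ and an element $e$ such that $C_1\cap C_2=\{e\}$ and $C=(C_1\cup C_2)-e$. *)

theory Defs
  imports Main
begin

type_synonym 'a matroid = "'a set \<times> 'a set set"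

definition gnd :: "'a matroid \<Rightarrow> 'a set" where "gnd M = fst M"
definition indep :: "'a matroid \<Rightarrow> 'a set set" where "indep M = snd M"

definition matroid :: "'a matroid \<Rightarrow> bool" where
  "matroid M \<longleftrightarrow> finite (gnd M) \<and> (\<forall>I\<in>indep M. I \<subseteq> gnd M) \<and> {} \<in> indep M
     \<and> (\<forall>I J. I \<in> indep M \<and> J \<subseteq> I \<longrightarrow> J \<in> indep M)
     \<and> (\<forall>I J. I \<in> indep M \<and> J \<in> indep M \<and> card I < card J \<longrightarrow>
            (\<exists>e\<in>J - I. insert e I \<in> indep M))"

definition rk :: "'a matroid \<Rightarrow> 'a set \<Rightarrow> nat" where
  "rk M X = Max {card I | I. I \<in> indep M \<and> I \<subseteq> X}"

definition cl :: "'a matroid \<Rightarrow> 'a set \<Rightarrow> 'a set" where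
  "cl M X = {e \<in> gnd M. rk M (insert e X) = rk M X}"

definition flat :: "'a matroid \<Rightarrow> 'a set \<Rightarrow> bool" where
  "flat M X \<longleftrightarrow> X \<subseteq> gnd M \<and> cl M X = X"

definition modular_flat :: "'a matroid \<Rightarrow> 'a set \<Rightarrow> bool" where
  "modular_flat M X \<longleftrightarrow> flat M X \<and>
     (\<forall>Y. flat M Y \<longrightarrow> rk M X + rk M Y = rk M (X \<union> Y) + rk M (X \<inter> Y))"

definition circuit :: "'a matroid \<Rightarrow> 'a set \<Rightarrow> bool" where
  "circuit M C \<longleftrightarrow> C \<subseteq> gnd M \<and> C \<notin> indep M \<and> (\<forall>D. D \<subset> C \<longrightarrow> D \<in> indep M)"

definition simple :: "'a matroid \<Rightarrow> bool" where
  "simple M \<longleftrightarrow> matroid M \<and> (\<forall>C. circuit M C \<longrightarrow> card C \<ge> 3)"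

definition restr :: "'a matroid \<Rightarrow> 'a set \<Rightarrow> 'a matroid" where
  "restr M T = (T, {I \<in> indep M. I \<subseteq> T})"

text \<open>The binary projective geometry of rank r: the vector matroid of all nonzero vectors of
  GF(2)^r.  A vector is encoded as its support, a subset of {..<r}; vector addition is symmetric
  difference, so a family G of vectors sums to zero iff every coordinate lies in an even number
  of members of G.\<close>
definition pg_ground :: "nat \<Rightarrow> nat set set" where
  "pg_ground r = {S. S \<subseteq> {..<r} \<and> S \<noteq> {}}"

definition gf2_lin_indep :: "nat set set \<Rightarrow> bool" where
  "gf2_lin_indep F \<longleftrightarrow> (\<forall>G. G \<subseteq> F \<and> G \<noteq> {} \<longrightarrow> \<not> (\<forall>i. even (card {S \<in> G. i \<in> S})))"

definition PG2 :: "nat \<Rightarrow> nat set matroid" where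
  "PG2 r = (pg_ground r, {F. F \<subseteq> pg_ground r \<and> gf2_lin_indep F})"

definition iso :: "'a matroid \<Rightarrow> 'b matroid \<Rightarrow> bool" where
  "iso M M' \<longleftrightarrow> (\<exists>f. bij_betw f (gnd M) (gnd M') \<and> indep M' = (\<lambda>I. f ` I) ` indep M)"

definition binary_pg :: "'a matroid \<Rightarrow> bool" where
  "binary_pg M \<longleftrightarrow> matroid M \<and> (\<exists>r. iso M (PG2 r))"

text \<open>M is the generalized parallel connection of M1 and M2 (across the common restriction to
  the intersection of the ground sets): M lives on the union of the ground sets and its flats are
  exactly the sets Z whose intersection with each ground set is a flat of the corresponding matroid.\<close>
definition is_gpc :: "'a matroid \<Rightarrow> 'a matroid \<Rightarrow> 'a matroid \<Rightarrow> bool" where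
  "is_gpc M1 M2 M \<longleftrightarrow> matroid M \<and> gnd M = gnd M1 \<union> gnd M2 \<and>
     (\<forall>Z. flat M Z \<longleftrightarrow> Z \<subseteq> gnd M \<and> flat M1 (Z \<inter> gnd M1) \<and> flat M2 (Z \<inter> gnd M2))"

inductive gf2_chordal :: "'a matroid \<Rightarrow> bool" where
  base: "binary_pg M \<Longrightarrow> gf2_chordal M"
| glue: "\<lbrakk> gf2_chordal M1; gf2_chordal M2; simple M1; simple M2; binary_pg N;
           gnd M1 \<inter> gnd M2 = gnd N; modular_flat M1 (gnd N);
           restr M1 (gnd N) = N; restr M2 (gnd N) = N; is_gpc M1 M2 M \<rbrakk>
         \<Longrightarrow> gf2_chordal M"

definition chordal :: "'a matroid \<Rightarrow> bool" where
  "chordal M \<longleftrightarrow> (\<forall>C. circuit M C \<and> card C \<ge> 4 \<longrightarrow>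
     (\<exists>C1 C2 e. circuit M C1 \<and> circuit M C2 \<and> C1 \<inter> C2 = {e} \<and> C = (C1 \<union> C2) - {e}))"

end

(*
  A binary projective geometry is chordal: a circuit C with at least four points c1, c2, ...
  splits along e = c1 + c2 into the triangle {c1, c2, e} and the circuit obtained from C by
  replacing c1, c2 by e.  Moreover all its flats are modular.

  Chordality survives a generalized parallel connection M of M1 and M2 across a projective
  geometry N on T.  A circuit of M inside one side is a circuit of that side.  A circuit C
  meeting both E1 - T and E2 - T has parts X1 = C - E2 and X2 = C \<inter> E2 whose spans share a point
  e of T: otherwise the traces of these spans on T are disjoint flats of the modular matroid N,
  hence skew, and the modularity of T in M1 makes X1 together with that trace too independent
  to span the point of X1 that C forces into the span of the rest.  Circuit elimination then
  shows that C splits along e into the circuits X1 + e and X2 + e.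

  The induction over the construction also carries the invariant that every restriction to a
  binary projective geometry is a modular flat; it gives the modularity of T in M2, which the
  definition of the construction only requires in M1.
*)

theory Submission
  imports Defs
begin

section \<open>Rank\<close>

lemma matroidD:
  assumes "matroid M"
  shows "finite (gnd M)" "\<And>I. I \<in> indep M \<Longrightarrow> I \<subseteq> gnd M" "{} \<in> indep M"
    "\<And>I J. I \<in> indep M \<Longrightarrow> J \<subseteq> I \<Longrightarrow> J \<in> indep M"
    "\<And>I J. I \<in> indep M \<Longrightarrow> J \<in> indep M \<Longrightarrow> card I < card J \<Longrightarrow> \<exists>e\<in>J - I. insert e I \<in> indep M"
  using assms unfolding matroid_def by blast+

lemma indep_finite: "matroid M \<Longrightarrow> I \<in> indep M \<Longrightarrow> finite I"
  by (meson finite_subset matroidD(1,2))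

lemma finite_card_indep_subsets: "matroid M \<Longrightarrow> finite {card I | I. I \<in> indep M \<and> I \<subseteq> X}"
proof -
  assume m: "matroid M"
  have "{card I | I. I \<in> indep M \<and> I \<subseteq> X} \<subseteq> card ` Pow (gnd M)"
    using matroidD(2)[OF m] by blast
  then show ?thesis using matroidD(1)[OF m] by (meson finite_Pow_iff finite_imageI finite_subset)
qed

lemma card_le_rk: "matroid M \<Longrightarrow> I \<in> indep M \<Longrightarrow> I \<subseteq> X \<Longrightarrow> card I \<le> rk M X"
  unfolding rk_def by (rule Max_ge[OF finite_card_indep_subsets]) auto

lemma rk_basis:
  assumes m: "matroid M"
  obtains B where "B \<subseteq> X" "B \<in> indep M" "card B = rk M X"
proof -
  let ?S = "{card I | I. I \<in> indep M \<and> I \<subseteq> X}"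
  have "card {} \<in> ?S" using matroidD(3)[OF m] by (intro CollectI exI[of _ "{}"]) simp
  then have "rk M X \<in> ?S" unfolding rk_def by (intro Max_in[OF finite_card_indep_subsets[OF m]]) auto
  then show ?thesis using that by auto
qed

lemma rk_basis_extend:
  assumes m: "matroid M" and I: "I \<in> indep M" "I \<subseteq> X"
  obtains B where "I \<subseteq> B" "B \<subseteq> X" "B \<in> indep M" "card B = rk M X"
proof -
  have "\<exists>B. I \<subseteq> B \<and> B \<subseteq> X \<and> B \<in> indep M \<and> card B = rk M X"
    if "I \<in> indep M" "I \<subseteq> X" "rk M X - card I = n" for I n
    using that
  proof (induction n arbitrary: I)
    case 0
    then show ?case using card_le_rk[OF m, of I X] by (intro exI[of _ I]) auto
  next
    case (Suc n)
    obtain J where J: "J \<subseteq> X" "J \<in> indep M" "card J = rk M X" using rk_basis[OF m] .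
    have "card I < card J" using Suc.prems J by linarith
    then obtain e where e: "e \<in> J - I" "insert e I \<in> indep M"
      using matroidD(5)[OF m Suc.prems(1) J(2)] by blast
    have "rk M X - card (insert e I) = n"
      using Suc.prems e indep_finite[OF m Suc.prems(1)] by auto
    moreover have "insert e I \<subseteq> X" using e J Suc.prems by auto
    ultimately show ?case using Suc.IH[OF e(2)] by blast
  qed
  from this[OF I refl] show ?thesis using that by blast
qed

lemma rk_mono:
  assumes m: "matroid M" and XY: "X \<subseteq> Y"
  shows "rk M X \<le> rk M Y"
proof -
  obtain B where "B \<subseteq> X" "B \<in> indep M" "card B = rk M X" using rk_basis[OF m] .
  then show ?thesis using card_le_rk[OF m, of B Y] XY by auto
qed

lemma rk_le_rk_insert: "matroid M \<Longrightarrow> rk M X \<le> rk M (insert e X)"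
  by (rule rk_mono) auto

lemma rk_le_card:
  assumes m: "matroid M" and X: "finite X"
  shows "rk M X \<le> card X"
proof -
  obtain B where "B \<subseteq> X" "B \<in> indep M" "card B = rk M X" using rk_basis[OF m] .
  then show ?thesis using card_mono[OF X] by metis
qed

lemma rk_indep: "matroid M \<Longrightarrow> I \<in> indep M \<Longrightarrow> rk M I = card I"
  by (meson antisym indep_finite card_le_rk rk_le_card subset_refl)

lemma Int_eq_if_card_eq_rk:
  assumes m: "matroid M" and B: "B \<in> indep M" and BT: "BT \<subseteq> B \<inter> X" "card BT = rk M X"
  shows "B \<inter> X = BT"
proof -
  have "card (B \<inter> X) \<le> card BT" using card_le_rk[OF m matroidD(4)[OF m B]] BT(2) by auto
  then show ?thesis using card_seteq[OF finite_subset[OF _ indep_finite[OF m B]] BT(1)] by auto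
qed

lemma rk_Int_gnd:
  assumes m: "matroid M"
  shows "rk M (X \<inter> gnd M) = rk M X"
proof -
  obtain B where B: "B \<subseteq> X" "B \<in> indep M" "card B = rk M X" using rk_basis[OF m] .
  then have "B \<subseteq> X \<inter> gnd M" using matroidD(2)[OF m] by blast
  then have "rk M X \<le> rk M (X \<inter> gnd M)" using card_le_rk[OF m B(2)] B(3) by simp
  then show ?thesis using rk_mono[OF m, of "X \<inter> gnd M" X] by simp
qed

lemma indep_iff_rk:
  assumes m: "matroid M" and I: "I \<subseteq> gnd M"
  shows "I \<in> indep M \<longleftrightarrow> rk M I = card I"
proof
  assume "rk M I = card I"
  moreover obtain B where "B \<subseteq> I" "B \<in> indep M" "card B = rk M I" using rk_basis[OF m] .
  moreover have "finite I" using m I matroidD(1) finite_subset by blast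
  ultimately show "I \<in> indep M" using card_subset_eq by metis
qed (rule rk_indep[OF m])

lemma rk_empty: "matroid M \<Longrightarrow> rk M {} = 0"
  using rk_le_card[of M "{}"] by simp

lemma rk_insert_le:
  assumes m: "matroid M"
  shows "rk M (insert e X) \<le> rk M X + 1"
proof -
  obtain B where B: "B \<subseteq> insert e X" "B \<in> indep M" "card B = rk M (insert e X)"
    using rk_basis[OF m] .
  have "card (B - {e}) \<le> rk M X"
    using card_le_rk[OF m matroidD(4)[OF m B(2)]] B(1) by blast
  moreover have "card B \<le> card (B - {e}) + 1"
    using indep_finite[OF m B(2)] by (cases "e \<in> B") (auto simp: card_Diff_singleton_if)
  ultimately show ?thesis using B by linarith
qed

lemma rk_submod:
  assumes m: "matroid M"
  shows "rk M (X \<union> Y) + rk M (X \<inter> Y) \<le> rk M X + rk M Y"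
proof -
  obtain B0 where B0: "B0 \<subseteq> X \<inter> Y" "B0 \<in> indep M" "card B0 = rk M (X \<inter> Y)"
    using rk_basis[OF m] .
  obtain B where B: "B0 \<subseteq> B" "B \<subseteq> X \<union> Y" "B \<in> indep M" "card B = rk M (X \<union> Y)"
    using rk_basis_extend[OF m B0(2), of "X \<union> Y"] B0 by blast
  have "B0 \<subseteq> B \<inter> (X \<inter> Y)" using B0 B by auto
  then have "B \<inter> (X \<inter> Y) = B0" using Int_eq_if_card_eq_rk[OF m B(3) _ B0(3)] by blast
  then have "(B \<inter> X) \<inter> (B \<inter> Y) = B0" by blast
  moreover have "(B \<inter> X) \<union> (B \<inter> Y) = B" using B by auto
  ultimately have "card B + card B0 = card (B \<inter> X) + card (B \<inter> Y)"
    using card_Un_Int[of "B \<inter> X" "B \<inter> Y"] indep_finite[OF m B(3)] by simp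
  moreover have "card (B \<inter> X) \<le> rk M X" "card (B \<inter> Y) \<le> rk M Y"
    using card_le_rk[OF m matroidD(4)[OF m B(3)]] by auto
  ultimately show ?thesis using B B0 by linarith
qed

lemma rk_Un_le: "matroid M \<Longrightarrow> rk M (X \<union> Y) \<le> rk M X + rk M Y"
  using rk_submod[of M X Y] by linarith

section \<open>Closure and flats\<close>

lemma cl_subset_gnd: "cl M X \<subseteq> gnd M"
  unfolding cl_def by auto

lemma mem_cl: "e \<in> cl M X \<longleftrightarrow> e \<in> gnd M \<and> rk M (insert e X) = rk M X"
  unfolding cl_def by auto

lemma Int_gnd_subset_cl: "X \<inter> gnd M \<subseteq> cl M X"
  unfolding cl_def by (auto simp: insert_absorb)

lemma subset_cl: "X \<subseteq> gnd M \<Longrightarrow> X \<subseteq> cl M X"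
  using Int_gnd_subset_cl[of X M] by auto

lemma cl_mono:
  assumes m: "matroid M" and XY: "X \<subseteq> Y"
  shows "cl M X \<subseteq> cl M Y"
proof
  fix e assume e: "e \<in> cl M X"
  have "insert e X \<union> Y = insert e Y" using XY by auto
  then have "rk M (insert e Y) + rk M (insert e X \<inter> Y) \<le> rk M (insert e X) + rk M Y"
    using rk_submod[OF m, of "insert e X" Y] by simp
  moreover have "rk M X \<le> rk M (insert e X \<inter> Y)" using rk_mono[OF m] XY by (simp add: subset_insertI2)
  moreover have "rk M Y \<le> rk M (insert e Y)" using rk_le_rk_insert[OF m] .
  ultimately show "e \<in> cl M Y" using e unfolding mem_cl by linarith
qed

lemma rk_Un_subset_cl:
  assumes m: "matroid M" and Y: "Y \<subseteq> cl M X"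
  shows "rk M (X \<union> Y) = rk M X"
proof -
  have "finite Y" using Y cl_subset_gnd matroidD(1)[OF m] finite_subset by metis
  then have "rk M (X \<union> Y) \<le> rk M X" using Y
  proof (induction Y rule: finite_induct)
    case (insert y Y)
    have "insert y X \<union> (X \<union> Y) = X \<union> insert y Y" by auto
    moreover have "rk M X \<le> rk M (insert y X \<inter> (X \<union> Y))" using rk_mono[OF m] by (simp add: subset_insertI2)
    ultimately have "rk M (X \<union> insert y Y) + rk M X \<le> rk M (insert y X) + rk M (X \<union> Y)"
      using rk_submod[OF m, of "insert y X" "X \<union> Y"] by simp
    moreover have "y \<in> cl M X" using insert.prems by simp
    then have "rk M (insert y X) = rk M X" unfolding mem_cl by simp
    ultimately show ?case using insert by simp
  qed simp
  then show ?thesis using rk_mono[OF m, of X "X \<union> Y"] by simp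
qed

lemma rk_cl:
  assumes m: "matroid M"
  shows "rk M (cl M X) = rk M X"
proof -
  have "rk M (cl M X) \<le> rk M X"
    using rk_mono[OF m, of "cl M X" "X \<union> cl M X"] rk_Un_subset_cl[OF m, of "cl M X" X] by simp
  moreover have "rk M X \<le> rk M (cl M X)"
    using rk_mono[OF m Int_gnd_subset_cl] rk_Int_gnd[OF m] by metis
  ultimately show ?thesis by simp
qed

lemma rk_cl_Un:
  assumes m: "matroid M"
  shows "rk M (cl M X \<union> Y) = rk M (X \<union> Y)"
proof (rule antisym)
  have "cl M X \<subseteq> cl M (X \<union> Y)" using cl_mono[OF m] by blast
  then show "rk M (cl M X \<union> Y) \<le> rk M (X \<union> Y)"
    using rk_mono[OF m, of "cl M X \<union> Y" "(X \<union> Y) \<union> cl M X"] rk_Un_subset_cl[OF m] by auto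
  have "(X \<union> Y) \<inter> gnd M \<subseteq> cl M X \<union> Y" using Int_gnd_subset_cl[of X M] by auto
  then show "rk M (X \<union> Y) \<le> rk M (cl M X \<union> Y)" using rk_mono[OF m] rk_Int_gnd[OF m] by metis
qed

lemma cl_cl_Un: "matroid M \<Longrightarrow> cl M (cl M X \<union> Y) = cl M (X \<union> Y)"
  using rk_cl_Un[of M X Y] rk_cl_Un[of M X "insert _ Y"] unfolding mem_cl set_eq_iff by simp

lemma cl_idem: "matroid M \<Longrightarrow> cl M (cl M X) = cl M X"
  using cl_cl_Un[of M X "{}"] by simp

lemma flat_cl: "matroid M \<Longrightarrow> flat M (cl M X)"
  unfolding flat_def using cl_subset_gnd[of M X] cl_idem[of M X] by simp

lemma flat_gnd: "matroid M \<Longrightarrow> flat M (gnd M)"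
  unfolding flat_def using cl_subset_gnd[of M "gnd M"] subset_cl[of "gnd M" M] by blast

lemma flat_subset_gnd: "flat M F \<Longrightarrow> F \<subseteq> gnd M"
  unfolding flat_def by blast

lemma flat_cl_eq: "flat M F \<Longrightarrow> cl M F = F"
  unfolding flat_def by blast

lemma cl_subset_flat: "matroid M \<Longrightarrow> flat M F \<Longrightarrow> X \<subseteq> F \<Longrightarrow> cl M X \<subseteq> F"
  unfolding flat_def using cl_mono[of M X F] by auto

lemma flat_Int:
  assumes m: "matroid M" and F: "flat M F" and G: "flat M G"
  shows "flat M (F \<inter> G)"
proof -
  have "cl M (F \<inter> G) \<subseteq> F" "cl M (F \<inter> G) \<subseteq> G"
    using cl_subset_flat[OF m F, of "F \<inter> G"] cl_subset_flat[OF m G, of "F \<inter> G"] by auto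
  moreover have "F \<inter> G \<subseteq> gnd M" using flat_subset_gnd[OF F] by auto
  moreover from this have "F \<inter> G \<subseteq> cl M (F \<inter> G)" by (rule subset_cl)
  ultimately show ?thesis unfolding flat_def by auto
qed

lemma subset_cl_if_rk_le:
  assumes m: "matroid M" and "X \<subseteq> S" "S \<subseteq> gnd M" "rk M S \<le> rk M X"
  shows "S \<subseteq> cl M X"
proof
  fix e assume "e \<in> S"
  then have "rk M (insert e X) \<le> rk M X" using rk_mono[OF m, of "insert e X" S] assms by auto
  then have "rk M (insert e X) = rk M X" using rk_le_rk_insert[OF m, of X e] by linarith
  then show "e \<in> cl M X" using assms \<open>e \<in> S\<close> unfolding mem_cl by auto
qed

lemma subset_cl_basis:
  assumes m: "matroid M" and "B \<subseteq> F" "F \<subseteq> gnd M" "B \<in> indep M" "card B = rk M F"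
  shows "F \<subseteq> cl M B"
  using subset_cl_if_rk_le[OF m, of B F] assms rk_indep[OF m] by auto

lemma insert_indep_iff:
  assumes m: "matroid M" and I: "I \<in> indep M" and e: "e \<in> gnd M" "e \<notin> I"
  shows "insert e I \<in> indep M \<longleftrightarrow> e \<notin> cl M I"
proof -
  have "insert e I \<subseteq> gnd M" using matroidD(2)[OF m I] e by auto
  then have "insert e I \<in> indep M \<longleftrightarrow> rk M (insert e I) = card I + 1"
    using indep_iff_rk[OF m] indep_finite[OF m I] e by simp
  moreover have "rk M I \<le> rk M (insert e I)" using rk_mono[OF m] by blast
  ultimately show ?thesis
    unfolding mem_cl using rk_insert_le[OF m, of e I] rk_indep[OF m I] e by auto
qed

lemma indep_iff_not_mem_cl:
  assumes m: "matroid M" and I: "I \<subseteq> gnd M"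
  shows "I \<in> indep M \<longleftrightarrow> (\<forall>x\<in>I. x \<notin> cl M (I - {x}))"
proof
  assume I_indep: "I \<in> indep M"
  show "\<forall>x\<in>I. x \<notin> cl M (I - {x})"
  proof
    fix x assume "x \<in> I"
    then have "insert x (I - {x}) \<in> indep M" using I_indep by (simp add: insert_absorb)
    then show "x \<notin> cl M (I - {x})"
      using insert_indep_iff[OF m matroidD(4)[OF m I_indep], of "I - {x}" x] I \<open>x \<in> I\<close> by auto
  qed
next
  assume H: "\<forall>x\<in>I. x \<notin> cl M (I - {x})"
  show "I \<in> indep M"
  proof (rule ccontr)
    assume "I \<notin> indep M"
    obtain B where B: "B \<subseteq> I" "B \<in> indep M" "card B = rk M I" using rk_basis[OF m] .
    moreover have "B \<noteq> I" using B(2) \<open>I \<notin> indep M\<close> by auto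
    ultimately obtain x where x: "x \<in> I" "x \<notin> B" by blast
    have "insert x B \<notin> indep M"
      using card_le_rk[OF m, of "insert x B" I] B x indep_finite[OF m B(2)] by auto
    then have "x \<in> cl M B" using insert_indep_iff[OF m B(2), of x] x I by auto
    moreover have "cl M B \<subseteq> cl M (I - {x})" using cl_mono[OF m, of B "I - {x}"] B x by auto
    ultimately show False using H x by auto
  qed
qed

section \<open>Circuits\<close>

lemma circuitD:
  assumes "circuit M C"
  shows "C \<subseteq> gnd M" "C \<notin> indep M" "\<And>D. D \<subset> C \<Longrightarrow> D \<in> indep M"
  using assms unfolding circuit_def by auto

lemma circuit_finite: "matroid M \<Longrightarrow> circuit M C \<Longrightarrow> finite C"
  using circuitD(1)[of M C] matroidD(1)[of M] finite_subset by blast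

lemma circuit_nonempty: "matroid M \<Longrightarrow> circuit M C \<Longrightarrow> C \<noteq> {}"
  using circuitD(2) matroidD(3) by blast

lemma circuit_subset_eq: "circuit M C \<Longrightarrow> circuit M D \<Longrightarrow> D \<subseteq> C \<Longrightarrow> D = C"
  unfolding circuit_def by blast

lemma circuit_mem_cl:
  assumes m: "matroid M" and C: "circuit M C" and x: "x \<in> C"
  shows "x \<in> cl M (C - {x})"
proof -
  have "C - {x} \<in> indep M" using circuitD(3)[OF C] x by blast
  then show ?thesis
    using insert_indep_iff[OF m, of "C - {x}" x] circuitD[OF C] x by (auto simp: insert_absorb)
qed

lemma dependent_contains_circuit:
  assumes m: "matroid M" and X: "X \<subseteq> gnd M" "X \<notin> indep M"
  obtains C where "C \<subseteq> X" "circuit M C"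
proof -
  have "finite X" using X matroidD(1)[OF m] finite_subset by blast
  then have "\<exists>C. C \<subseteq> X \<and> circuit M C" using X
  proof (induction X rule: finite_psubset_induct)
    case (psubset X)
    show ?case
    proof (cases "\<forall>D. D \<subset> X \<longrightarrow> D \<in> indep M")
      case True
      then show ?thesis using psubset.prems unfolding circuit_def by auto
    next
      case False
      then obtain D where "D \<subset> X" "D \<notin> indep M" by auto
      then show ?thesis using psubset.IH[of D] psubset.prems by blast
    qed
  qed
  then show ?thesis using that by blast
qed

lemma circuit_rk:
  assumes m: "matroid M" and C: "circuit M C"
  shows "rk M C + 1 = card C"
proof -
  obtain x where x: "x \<in> C" using circuit_nonempty[OF m C] by blast
  have "card (C - {x}) \<le> rk M C" using card_le_rk[OF m] circuitD(3)[OF C] x by blast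
  moreover have "card (C - {x}) + 1 = card C"
    using card_Suc_Diff1[OF circuit_finite[OF m C] x] by simp
  moreover have "rk M C \<noteq> card C" using indep_iff_rk[OF m circuitD(1)[OF C]] circuitD(2)[OF C] by blast
  moreover have "rk M C \<le> card C" using rk_le_card[OF m circuit_finite[OF m C]] .
  ultimately show ?thesis by linarith
qed

lemma circuit_elimination:
  assumes m: "matroid M" and C1: "circuit M C1" and C2: "circuit M C2" and ne: "C1 \<noteq> C2"
    and e: "e \<in> C1 \<inter> C2"
  obtains C where "C \<subseteq> (C1 \<union> C2) - {e}" "circuit M C"
proof -
  have fin: "finite C1" "finite C2" using circuit_finite[OF m] C1 C2 by auto
  have "C1 \<inter> C2 \<subset> C1" using circuit_subset_eq[OF C2 C1] ne by auto
  then have "rk M (C1 \<inter> C2) = card (C1 \<inter> C2)" using rk_indep[OF m] circuitD(3)[OF C1] by blast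
  moreover have "card (C1 \<union> C2) + card (C1 \<inter> C2) = card C1 + card C2" using card_Un_Int[OF fin] by simp
  moreover have "card (C1 \<union> C2 - {e}) + 1 = card (C1 \<union> C2)"
    using card_Suc_Diff1[of "C1 \<union> C2" e] e fin by simp
  moreover have "rk M (C1 \<union> C2 - {e}) \<le> rk M (C1 \<union> C2)" using rk_mono[OF m] by blast
  ultimately have "rk M (C1 \<union> C2 - {e}) \<noteq> card (C1 \<union> C2 - {e})"
    using rk_submod[OF m, of C1 C2] circuit_rk[OF m C1] circuit_rk[OF m C2] by linarith
  moreover have sub: "C1 \<union> C2 - {e} \<subseteq> gnd M" using circuitD(1) C1 C2 by blast
  ultimately have "C1 \<union> C2 - {e} \<notin> indep M" using indep_iff_rk[OF m sub] by blast
  then show ?thesis using dependent_contains_circuit[OF m sub] that by blast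
qed

lemma circuit_iff_delete:
  assumes m: "matroid M"
  shows "circuit M C \<longleftrightarrow> C \<subseteq> gnd M \<and> C \<notin> indep M \<and> (\<forall>x\<in>C. C - {x} \<in> indep M)"
proof
  assume C: "circuit M C"
  moreover have "C - {x} \<subset> C" if "x \<in> C" for x using that by auto
  ultimately show "C \<subseteq> gnd M \<and> C \<notin> indep M \<and> (\<forall>x\<in>C. C - {x} \<in> indep M)"
    using circuitD[OF C] by simp
next
  assume H: "C \<subseteq> gnd M \<and> C \<notin> indep M \<and> (\<forall>x\<in>C. C - {x} \<in> indep M)"
  have "D \<in> indep M" if "D \<subset> C" for D
  proof -
    obtain x where "x \<in> C" "D \<subseteq> C - {x}" using \<open>D \<subset> C\<close> by blast
    then show ?thesis using H matroidD(4)[OF m] by blast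
  qed
  then show "circuit M C" unfolding circuit_def using H by blast
qed

lemma circuit_mem_flat:
  assumes m: "matroid M" and C: "circuit M C" and F: "flat M F" and y: "y \<in> C" and CF: "C - {y} \<subseteq> F"
  shows "y \<in> F"
  using circuit_mem_cl[OF m C y] cl_subset_flat[OF m F CF] by blast

lemma insert_dependent_circuit:
  assumes m: "matroid M" and I: "I \<in> indep M" and e: "e \<in> gnd M" "e \<notin> I"
    and dep: "insert e I \<notin> indep M"
  obtains C where "circuit M C" "e \<in> C" "C \<subseteq> insert e I"
proof -
  have "insert e I \<subseteq> gnd M" using matroidD(2)[OF m I] e by blast
  then obtain C where C: "C \<subseteq> insert e I" "circuit M C" using dependent_contains_circuit[OF m _ dep] by blast
  have "e \<in> C"
  proof (rule ccontr)
    assume "e \<notin> C"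
    then have "C \<in> indep M" using C(1) matroidD(4)[OF m I] by blast
    then show False using circuitD(2)[OF C(2)] by blast
  qed
  then show ?thesis using that C by blast
qed

lemma gnd_restr: "gnd (restr M T) = T"
  unfolding restr_def gnd_def by simp

lemma indep_restr: "indep (restr M T) = {I \<in> indep M. I \<subseteq> T}"
  unfolding restr_def indep_def by simp

lemma matroid_restr:
  assumes m: "matroid M" and T: "T \<subseteq> gnd M"
  shows "matroid (restr M T)"
  unfolding matroid_def gnd_restr indep_restr
proof (intro conjI allI impI ballI)
  show "finite T" using finite_subset[OF T matroidD(1)[OF m]] .
  show "{} \<in> {I \<in> indep M. I \<subseteq> T}" using matroidD(3)[OF m] by simp
  fix I assume "I \<in> {I \<in> indep M. I \<subseteq> T}"
  then show "I \<subseteq> T" by simp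
next
  fix I J assume "I \<in> {I \<in> indep M. I \<subseteq> T} \<and> J \<subseteq> I"
  then show "J \<in> {I \<in> indep M. I \<subseteq> T}" using matroidD(4)[OF m] by blast
next
  fix I J assume H: "I \<in> {I \<in> indep M. I \<subseteq> T} \<and> J \<in> {I \<in> indep M. I \<subseteq> T} \<and> card I < card J"
  then obtain e where "e \<in> J - I" "insert e I \<in> indep M" using matroidD(5)[OF m] by blast
  then show "\<exists>e\<in>J - I. insert e I \<in> {I \<in> indep M. I \<subseteq> T}" using H by blast
qed

lemma circuit_restr: "T \<subseteq> gnd M \<Longrightarrow> circuit (restr M T) C \<Longrightarrow> circuit M C"
  unfolding circuit_def gnd_restr indep_restr by auto

lemma rk_restr: "X \<subseteq> T \<Longrightarrow> rk (restr M T) X = rk M X"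
  unfolding rk_def indep_restr by (rule arg_cong[where f = Max]) auto

lemma cl_restr:
  assumes T: "T \<subseteq> gnd M" and X: "X \<subseteq> T"
  shows "cl (restr M T) X = cl M X \<inter> T"
proof -
  have "rk (restr M T) (insert e X) = rk M (insert e X)" if "e \<in> T" for e
    using rk_restr[of "insert e X" T M] that X by auto
  then show ?thesis unfolding cl_def gnd_restr using rk_restr[OF X] T by auto
qed

lemma flat_restr:
  assumes T: "T \<subseteq> gnd M" and S: "flat M S" and ST: "S \<subseteq> T"
  shows "flat (restr M T) S"
  unfolding flat_def gnd_restr using cl_restr[OF T ST] flat_cl_eq[OF S] ST by auto

section \<open>Isomorphic matroids\<close>

locale matroid_iso =
  fixes M :: "'a matroid" and M' :: "'b matroid" and f :: "'a \<Rightarrow> 'b"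
  assumes matroid: "matroid M" and bij: "bij_betw f (gnd M) (gnd M')"
    and indep': "indep M' = (\<lambda>I. f ` I) ` indep M"
begin

lemma inj: "inj_on f (gnd M)"
  using bij_betw_imp_inj_on[OF bij] .

lemma image_gnd: "f ` gnd M = gnd M'"
  using bij_betw_imp_surj_on[OF bij] .

lemma subset_gnd'_iff: "X' \<subseteq> gnd M' \<longleftrightarrow> (\<exists>X\<subseteq>gnd M. X' = f ` X)"
  using subset_image_iff[of X' f "gnd M"] image_gnd by simp

lemma image_subset_image_iff:
  assumes X: "X \<subseteq> gnd M" and Y: "Y \<subseteq> gnd M"
  shows "f ` X \<subseteq> f ` Y \<longleftrightarrow> X \<subseteq> Y"
proof
  assume H: "f ` X \<subseteq> f ` Y"
  show "X \<subseteq> Y"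
  proof
    fix x assume x: "x \<in> X"
    then have "f x \<in> f ` Y" using H by blast
    then show "x \<in> Y" using inj_on_image_mem_iff[OF inj _ Y] x X by blast
  qed
qed (rule image_mono)

lemma card_image_gnd: "X \<subseteq> gnd M \<Longrightarrow> card (f ` X) = card X"
  by (rule card_image[OF inj_on_subset[OF inj]])

lemma indep_image_iff:
  assumes I: "I \<subseteq> gnd M"
  shows "f ` I \<in> indep M' \<longleftrightarrow> I \<in> indep M"
proof
  assume "f ` I \<in> indep M'"
  then obtain J where J: "J \<in> indep M" "f ` I = f ` J" using indep' by auto
  then have "I = J" using inj_on_image_eq_iff[OF inj I matroidD(2)[OF matroid J(1)]] by simp
  then show "I \<in> indep M" using J by simp
qed (simp add: indep')

lemma matroid': "matroid M'"
  unfolding matroid_def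
proof (intro conjI allI impI ballI)
  show "finite (gnd M')" using image_gnd matroidD(1)[OF matroid] by (metis finite_imageI)
  show "{} \<in> indep M'" using indep' matroidD(3)[OF matroid] by (simp add: rev_image_eqI)
  fix I' assume "I' \<in> indep M'"
  then obtain I where "I \<in> indep M" "I' = f ` I" using indep' by auto
  then show "I' \<subseteq> gnd M'" using matroidD(2)[OF matroid] image_gnd by auto
next
  fix I' J' assume H: "I' \<in> indep M' \<and> J' \<subseteq> I'"
  then obtain I where I: "I \<in> indep M" "I' = f ` I" using indep' by auto
  have "J' = f ` {x \<in> I. f x \<in> J'}" using H I by auto
  moreover have "{x \<in> I. f x \<in> J'} \<in> indep M" using matroidD(4)[OF matroid I(1)] by auto
  ultimately show "J' \<in> indep M'" using indep' by auto
next
  fix I' J' assume H: "I' \<in> indep M' \<and> J' \<in> indep M' \<and> card I' < card J'"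
  then obtain I J where I: "I \<in> indep M" "I' = f ` I" and J: "J \<in> indep M" "J' = f ` J"
    using indep' by auto
  have sub: "I \<subseteq> gnd M" "J \<subseteq> gnd M" using matroidD(2)[OF matroid] I J by auto
  then have "card I < card J" using H I J card_image_gnd by simp
  then obtain e where e: "e \<in> J - I" "insert e I \<in> indep M"
    using matroidD(5)[OF matroid I(1) J(1)] by blast
  then have "f e \<notin> f ` I" using inj_on_image_mem_iff[OF inj, of e I] sub by auto
  moreover have "insert (f e) I' \<in> indep M'" using e(2) I(2) indep' by (metis image_insert imageI)
  ultimately show "\<exists>e\<in>J' - I'. insert e I' \<in> indep M'" using e I J by auto
qed

lemma rk_image:
  assumes X: "X \<subseteq> gnd M"
  shows "rk M' (f ` X) = rk M X"
proof (rule antisym)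
  obtain B' where B': "B' \<subseteq> f ` X" "B' \<in> indep M'" "card B' = rk M' (f ` X)"
    using rk_basis[OF matroid'] .
  then obtain B where B: "B \<in> indep M" "B' = f ` B" using indep' by auto
  then have "B \<subseteq> X" using image_subset_image_iff[OF matroidD(2)[OF matroid B(1)] X] B'(1) by simp
  then show "rk M' (f ` X) \<le> rk M X"
    using card_le_rk[OF matroid B(1)] card_image_gnd[OF matroidD(2)[OF matroid B(1)]] B B' by simp
next
  obtain B where B: "B \<subseteq> X" "B \<in> indep M" "card B = rk M X" using rk_basis[OF matroid] .
  then have "f ` B \<in> indep M'" "f ` B \<subseteq> f ` X" using indep' by auto
  then show "rk M X \<le> rk M' (f ` X)"
    using card_le_rk[OF matroid'] card_image_gnd[OF matroidD(2)[OF matroid B(2)]] B(3) by metis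
qed

lemma cl_image:
  assumes X: "X \<subseteq> gnd M"
  shows "cl M' (f ` X) = f ` cl M X"
proof -
  have mem: "f e \<in> cl M' (f ` X) \<longleftrightarrow> e \<in> cl M X" if e: "e \<in> gnd M" for e
    using rk_image[OF X] rk_image[of "insert e X"] X e image_gnd unfolding mem_cl by auto
  show ?thesis
  proof
    show "cl M' (f ` X) \<subseteq> f ` cl M X"
    proof
      fix y assume y: "y \<in> cl M' (f ` X)"
      then obtain e where "e \<in> gnd M" "y = f e" using cl_subset_gnd[of M' "f ` X"] image_gnd by auto
      then show "y \<in> f ` cl M X" using mem y by auto
    qed
    show "f ` cl M X \<subseteq> cl M' (f ` X)" using mem cl_subset_gnd[of M X] by auto
  qed
qed

lemma flat_image_iff:
  assumes X: "X \<subseteq> gnd M"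
  shows "flat M' (f ` X) \<longleftrightarrow> flat M X"
proof -
  have "f ` X \<subseteq> gnd M'" using X image_gnd by auto
  moreover have "cl M' (f ` X) = f ` X \<longleftrightarrow> cl M X = X"
    using cl_image[OF X] inj_on_image_eq_iff[OF inj cl_subset_gnd X] by simp
  ultimately show ?thesis unfolding flat_def using X by auto
qed

lemma circuit_image_iff:
  assumes C: "C \<subseteq> gnd M"
  shows "circuit M' (f ` C) \<longleftrightarrow> circuit M C"
proof -
  have "f ` C - {f x} = f ` (C - {x})" if "x \<in> C" for x
    using inj_on_image_set_diff[OF inj, of C "{x}"] C that by auto
  moreover have "f ` (C - {x}) \<in> indep M' \<longleftrightarrow> C - {x} \<in> indep M" for x
    using indep_image_iff[of "C - {x}"] C by auto
  ultimately have "(\<forall>x'\<in>f ` C. f ` C - {x'} \<in> indep M') \<longleftrightarrow> (\<forall>x\<in>C. C - {x} \<in> indep M)"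
    by auto
  moreover have "f ` C \<subseteq> gnd M'" using C image_gnd by auto
  ultimately show ?thesis
    using circuit_iff_delete[OF matroid] circuit_iff_delete[OF matroid'] indep_image_iff[OF C] C by auto
qed

lemma modular_flat_image_iff:
  assumes X: "X \<subseteq> gnd M"
  shows "modular_flat M' (f ` X) \<longleftrightarrow> modular_flat M X"
proof -
  have rk_eq: "rk M' (f ` X) + rk M' (f ` Y) = rk M' (f ` X \<union> f ` Y) + rk M' (f ` X \<inter> f ` Y)
      \<longleftrightarrow> rk M X + rk M Y = rk M (X \<union> Y) + rk M (X \<inter> Y)" if Y: "Y \<subseteq> gnd M" for Y
  proof -
    have "rk M' (f ` X \<union> f ` Y) = rk M (X \<union> Y)" using rk_image[of "X \<union> Y"] X Y by (simp add: image_Un)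
    moreover have "rk M' (f ` X \<inter> f ` Y) = rk M (X \<inter> Y)"
      using rk_image[of "X \<inter> Y"] inj_on_image_Int[OF inj X Y] X by auto
    ultimately show ?thesis using rk_image X Y by simp
  qed
  show ?thesis
  proof
    assume H: "modular_flat M' (f ` X)"
    show "modular_flat M X"
      unfolding modular_flat_def
    proof (intro conjI allI impI)
      show "flat M X" using H flat_image_iff[OF X] unfolding modular_flat_def by simp
      fix Y assume Y: "flat M Y"
      then have "flat M' (f ` Y)" using flat_image_iff[OF flat_subset_gnd[OF Y]] by simp
      then show "rk M X + rk M Y = rk M (X \<union> Y) + rk M (X \<inter> Y)"
        using H rk_eq[OF flat_subset_gnd[OF Y]] unfolding modular_flat_def by simp
    qed
  next
    assume H: "modular_flat M X"
    show "modular_flat M' (f ` X)"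
      unfolding modular_flat_def
    proof (intro conjI allI impI)
      show "flat M' (f ` X)" using H flat_image_iff[OF X] unfolding modular_flat_def by simp
      fix Y' assume Y': "flat M' Y'"
      then have "Y' \<subseteq> gnd M'" by (rule flat_subset_gnd)
      then obtain Y where Y: "Y \<subseteq> gnd M" "Y' = f ` Y" unfolding subset_gnd'_iff by blast
      then have "flat M Y" using Y' flat_image_iff by simp
      then show "rk M' (f ` X) + rk M' Y' = rk M' (f ` X \<union> Y') + rk M' (f ` X \<inter> Y')"
        using H rk_eq[OF Y(1)] Y(2) unfolding modular_flat_def by simp
    qed
  qed
qed

lemma chordal_if_chordal':
  assumes "chordal M'"
  shows "chordal M"
  unfolding chordal_def
proof (intro allI impI)
  fix C assume C: "circuit M C \<and> 4 \<le> card C"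
  have sC: "C \<subseteq> gnd M" using circuitD(1) C by blast
  then have "circuit M' (f ` C) \<and> 4 \<le> card (f ` C)" using circuit_image_iff card_image_gnd C by simp
  then obtain C1' C2' e' where C': "circuit M' C1'" "circuit M' C2'" "C1' \<inter> C2' = {e'}"
    "f ` C = C1' \<union> C2' - {e'}"
    using assms[unfolded chordal_def, rule_format] by meson
  obtain C1 where C1: "C1 \<subseteq> gnd M" "C1' = f ` C1"
    using circuitD(1)[OF C'(1)] unfolding subset_gnd'_iff by blast
  obtain C2 where C2: "C2 \<subseteq> gnd M" "C2' = f ` C2"
    using circuitD(1)[OF C'(2)] unfolding subset_gnd'_iff by blast
  have "e' \<in> gnd M'" using C'(3) circuitD(1)[OF C'(1)] by blast
  then obtain e where e: "e \<in> gnd M" "e' = f e" using image_gnd by auto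
  have "f ` (C1 \<inter> C2) = f ` {e}"
    using inj_on_image_Int[OF inj C1(1) C2(1)] C'(3) C1 C2 e by simp
  then have "C1 \<inter> C2 = {e}" using inj_on_image_eq_iff[OF inj, of "C1 \<inter> C2" "{e}"] C1 e by auto
  moreover have "C1 \<union> C2 - {e} \<subseteq> gnd M" "{e} \<subseteq> gnd M" using C1 C2 e by auto
  then have "f ` C = f ` (C1 \<union> C2 - {e})"
    using C'(4) C1 C2 e inj_on_image_set_diff[OF inj] by (simp add: image_Un)
  then have "C = C1 \<union> C2 - {e}" using inj_on_image_eq_iff[OF inj sC, of "C1 \<union> C2 - {e}"] C1 C2 by auto
  moreover have "circuit M C1" "circuit M C2"
    using circuit_image_iff[OF C1(1)] circuit_image_iff[OF C2(1)] C'(1,2) C1(2) C2(2) by auto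
  ultimately show "\<exists>C1 C2 e. circuit M C1 \<and> circuit M C2 \<and> C1 \<inter> C2 = {e} \<and> C = C1 \<union> C2 - {e}"
    by blast
qed

end

section \<open>Binary projective geometries\<close>

definition gf2_sum :: "nat set set \<Rightarrow> nat set" where
  "gf2_sum G = {i. odd (card {S \<in> G. i \<in> S})}"

lemma gf2_lin_indep_iff: "gf2_lin_indep F \<longleftrightarrow> (\<forall>G\<subseteq>F. G \<noteq> {} \<longrightarrow> gf2_sum G \<noteq> {})"
  unfolding gf2_lin_indep_def gf2_sum_def by auto

lemma gf2_sum_empty [simp]: "gf2_sum {} = {}"
  unfolding gf2_sum_def by simp

lemma gf2_sum_singleton [simp]: "gf2_sum {a} = a"
proof -
  have "{S \<in> {a}. i \<in> S} = (if i \<in> a then {a} else {})" for i by auto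
  then show ?thesis unfolding gf2_sum_def by auto
qed

lemma gf2_sum_Un_disjoint:
  assumes "finite G" "finite H" "G \<inter> H = {}"
  shows "gf2_sum (G \<union> H) = sym_diff (gf2_sum G) (gf2_sum H)"
proof -
  have "{S \<in> G \<union> H. i \<in> S} = {S \<in> G. i \<in> S} \<union> {S \<in> H. i \<in> S}" for i by auto
  then have "card {S \<in> G \<union> H. i \<in> S} = card {S \<in> G. i \<in> S} + card {S \<in> H. i \<in> S}" for i
    using assms by (simp add: card_Un_disjoint disjoint_iff)
  then show ?thesis unfolding gf2_sum_def by auto
qed

lemma gf2_sum_insert: "finite G \<Longrightarrow> a \<notin> G \<Longrightarrow> gf2_sum (insert a G) = sym_diff a (gf2_sum G)"
  using gf2_sum_Un_disjoint[of "{a}" G] by simp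

lemma gf2_sum_mem_if_closed:
  assumes closed: "\<forall>x\<in>U. \<forall>y\<in>U. x \<noteq> y \<longrightarrow> sym_diff x y \<in> U"
    and H: "finite H" "H \<subseteq> U"
  shows "gf2_sum H \<in> insert {} U"
  using H
proof (induction H rule: finite_induct)
  case (insert h H)
  then have "gf2_sum H \<in> insert {} U" "h \<in> U" by auto
  then show ?case using gf2_sum_insert[OF insert(1,2)] closed by auto
qed simp

lemma gnd_PG2: "gnd (PG2 r) = pg_ground r"
  unfolding PG2_def gnd_def by simp

lemma indep_PG2_iff:
  "F \<in> indep (PG2 r) \<longleftrightarrow> F \<subseteq> pg_ground r \<and> (\<forall>G\<subseteq>F. G \<noteq> {} \<longrightarrow> gf2_sum G \<noteq> {})"
  unfolding PG2_def indep_def gf2_lin_indep_iff by simp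

lemma finite_pg_ground: "finite (pg_ground r)"
proof -
  have "pg_ground r \<subseteq> Pow {..<r}" unfolding pg_ground_def by auto
  then show ?thesis by (rule finite_subset) simp
qed

lemma sym_diff_in_pg_ground:
  "x \<in> pg_ground r \<Longrightarrow> y \<in> pg_ground r \<Longrightarrow> x \<noteq> y \<Longrightarrow> sym_diff x y \<in> pg_ground r"
  unfolding pg_ground_def by auto

lemma circuit_PG2_iff:
  "circuit (PG2 r) C \<longleftrightarrow>
     C \<subseteq> pg_ground r \<and> C \<noteq> {} \<and> gf2_sum C = {} \<and> (\<forall>H. H \<subset> C \<and> H \<noteq> {} \<longrightarrow> gf2_sum H \<noteq> {})"
  (is "_ \<longleftrightarrow> ?rhs")
proof
  assume C: "circuit (PG2 r) C"
  have sub: "C \<subseteq> pg_ground r" using circuitD(1)[OF C] gnd_PG2 by simp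
  then obtain G where G: "G \<subseteq> C" "G \<noteq> {}" "gf2_sum G = {}"
    using circuitD(2)[OF C] unfolding indep_PG2_iff by blast
  have nonzero: "gf2_sum H \<noteq> {}" if "H \<subset> C" "H \<noteq> {}" for H
    using circuitD(3)[OF C \<open>H \<subset> C\<close>] that unfolding indep_PG2_iff by blast
  then have "G = C" using G by blast
  then show ?rhs using sub G nonzero by auto
next
  assume H: ?rhs
  have "D \<in> indep (PG2 r)" if "D \<subset> C" for D
    using H that unfolding indep_PG2_iff by (meson subset_psubset_trans order.trans psubset_imp_subset)
  moreover have "C \<notin> indep (PG2 r)" using H unfolding indep_PG2_iff by blast
  ultimately show "circuit (PG2 r) C" unfolding circuit_def gnd_PG2 using H by blast
qed

lemma gf2_sum_nonzero_if_card_le_2: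
  assumes "G \<subseteq> pg_ground r" "G \<noteq> {}" "card G \<le> 2"
  shows "gf2_sum G \<noteq> {}"
proof -
  have "finite G" using assms(1) finite_pg_ground finite_subset by blast
  then have "card G \<noteq> 0" using assms(2) by simp
  then have "card G = 1 \<or> card G = 2" using assms(3) by linarith
  then show ?thesis
  proof
    assume "card G = 1"
    then obtain a where "G = {a}" by (rule card_1_singletonE)
    then show ?thesis using assms(1) unfolding pg_ground_def by simp
  next
    assume "card G = 2"
    then obtain a b where "G = {a, b}" "a \<noteq> b" by (meson card_2_iff)
    then show ?thesis using gf2_sum_insert[of "{b}" a] by auto
  qed
qed

lemma circuit_PG2_triangle:
  assumes x: "x \<in> pg_ground r" and y: "y \<in> pg_ground r" and xy: "x \<noteq> y"
  shows "circuit (PG2 r) {x, y, sym_diff x y}"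
proof -
  let ?z = "sym_diff x y"
  have z: "?z \<in> pg_ground r" "?z \<noteq> x" "?z \<noteq> y"
    using sym_diff_in_pg_ground[OF x y xy] x y unfolding pg_ground_def by auto
  have "gf2_sum {x, y, ?z} = {}" using gf2_sum_insert[of "{y, ?z}" x] gf2_sum_insert[of "{?z}" y] z xy by auto
  moreover have "card {x, y, ?z} = 3" using z xy by auto
  then have "gf2_sum H \<noteq> {}" if "H \<subset> {x, y, ?z}" "H \<noteq> {}" for H
    using gf2_sum_nonzero_if_card_le_2[of H r] psubset_card_mono[OF _ that(1)] that x y z by auto
  ultimately show ?thesis unfolding circuit_PG2_iff using x y z by auto
qed

lemma circuit_PG2_triangle_third:
  assumes C: "circuit (PG2 r) {x, y, z}" and d: "x \<noteq> y" "x \<noteq> z" "y \<noteq> z"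
  shows "z = sym_diff x y"
proof -
  have "gf2_sum {x, y, z} = {}" using C unfolding circuit_PG2_iff by blast
  then have "sym_diff x (sym_diff y z) = {}" using gf2_sum_insert[of "{y, z}" x] gf2_sum_insert[of "{z}" y] d by simp
  then show ?thesis by blast
qed

text \<open>The matroid axioms for \<^term>\<open>PG2 r\<close> are never proved here: the lemmas needing them are
  only applied to geometries isomorphic to a matroid, which inherit the axioms.\<close>

context
  fixes r :: nat
  assumes matroid_PG2: "matroid (PG2 r)"
begin

lemma cl_PG2_sym_diff:
  assumes x: "x \<in> cl (PG2 r) X" and y: "y \<in> cl (PG2 r) X" and xy: "x \<noteq> y"
  shows "sym_diff x y \<in> cl (PG2 r) X"
proof -
  have "x \<in> pg_ground r" "y \<in> pg_ground r"
    using x y cl_subset_gnd[of "PG2 r" X] unfolding gnd_PG2 by auto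
  then have "circuit (PG2 r) {x, y, sym_diff x y}" using circuit_PG2_triangle xy by blast
  then have "sym_diff x y \<in> cl (PG2 r) ({x, y, sym_diff x y} - {sym_diff x y})"
    using circuit_mem_cl[OF matroid_PG2] by blast
  also have "\<dots> \<subseteq> cl (PG2 r) (cl (PG2 r) X)" using x y by (intro cl_mono[OF matroid_PG2]) auto
  finally show ?thesis using cl_idem[OF matroid_PG2] by blast
qed

lemma insert_dependent_PG2_sum:
  assumes B: "B \<in> indep (PG2 r)" and e: "e \<in> pg_ground r" "e \<notin> B"
    and dep: "insert e B \<notin> indep (PG2 r)"
  obtains K where "K \<subseteq> B" "gf2_sum K = e"
proof -
  have B_sub: "B \<subseteq> pg_ground r" using B unfolding indep_PG2_iff by blast
  obtain G where G: "G \<subseteq> insert e B" "G \<noteq> {}" "gf2_sum G = {}"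
    using dep B_sub e unfolding indep_PG2_iff by blast
  have "e \<in> G" using G B unfolding indep_PG2_iff by blast
  have "G - {e} \<subseteq> pg_ground r" using G B_sub by auto
  then have "finite (G - {e})" using finite_pg_ground by (rule finite_subset)
  then have "sym_diff e (gf2_sum (G - {e})) = {}"
    using gf2_sum_insert[of "G - {e}" e] G(3) \<open>e \<in> G\<close> by (simp add: insert_absorb)
  then have "gf2_sum (G - {e}) = e" by blast
  moreover have "G - {e} \<subseteq> B" using G by auto
  ultimately show ?thesis using that by blast
qed

lemma cl_PG2:
  assumes X: "X \<subseteq> pg_ground r"
  shows "cl (PG2 r) X = {gf2_sum H | H. H \<subseteq> X} - {{}}"
proof
  show "cl (PG2 r) X \<subseteq> {gf2_sum H | H. H \<subseteq> X} - {{}}"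
  proof
    fix e assume "e \<in> cl (PG2 r) X"
    then have e: "e \<in> pg_ground r" "rk (PG2 r) (insert e X) = rk (PG2 r) X"
      unfolding mem_cl gnd_PG2 by auto
    obtain B where B: "B \<subseteq> X" "B \<in> indep (PG2 r)" "card B = rk (PG2 r) X"
      using rk_basis[OF matroid_PG2] .
    have "\<exists>H\<subseteq>X. gf2_sum H = e"
    proof (cases "e \<in> B")
      case True
      then show ?thesis using B(1) by (intro exI[of _ "{e}"]) auto
    next
      case False
      have "insert e B \<notin> indep (PG2 r)"
      proof
        assume "insert e B \<in> indep (PG2 r)"
        then have "card (insert e B) \<le> rk (PG2 r) (insert e X)"
          using card_le_rk[OF matroid_PG2] B(1) by blast
        then show False using False B e indep_finite[OF matroid_PG2 B(2)] by simp
      qed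
      then obtain K where "K \<subseteq> B" "gf2_sum K = e"
        using insert_dependent_PG2_sum[OF B(2) e(1) False] by blast
      then show ?thesis using B(1) by blast
    qed
    moreover have "e \<noteq> {}" using e(1) unfolding pg_ground_def by blast
    ultimately show "e \<in> {gf2_sum H | H. H \<subseteq> X} - {{}}" by blast
  qed
  show "{gf2_sum H | H. H \<subseteq> X} - {{}} \<subseteq> cl (PG2 r) X"
  proof
    fix e assume "e \<in> {gf2_sum H | H. H \<subseteq> X} - {{}}"
    then obtain H where H: "H \<subseteq> X" "gf2_sum H = e" "e \<noteq> {}" by blast
    have "X \<subseteq> cl (PG2 r) X" using subset_cl[of X "PG2 r"] X gnd_PG2 by simp
    moreover have "finite H" using H(1) X finite_pg_ground by (meson finite_subset order.trans)
    ultimately have "gf2_sum H \<in> insert {} (cl (PG2 r) X)"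
      using gf2_sum_mem_if_closed[of "cl (PG2 r) X" H] cl_PG2_sym_diff H(1) by blast
    then show "e \<in> cl (PG2 r) X" using H by simp
  qed
qed

lemma flat_PG2_if_sym_diff_closed:
  assumes U: "U \<subseteq> pg_ground r" and closed: "\<forall>x\<in>U. \<forall>y\<in>U. x \<noteq> y \<longrightarrow> sym_diff x y \<in> U"
  shows "flat (PG2 r) U"
proof -
  have "cl (PG2 r) U \<subseteq> U"
  proof
    fix e assume "e \<in> cl (PG2 r) U"
    then obtain H where H: "H \<subseteq> U" "gf2_sum H = e" "e \<noteq> {}" unfolding cl_PG2[OF U] by blast
    moreover have "finite H" using H(1) U finite_pg_ground by (meson finite_subset order.trans)
    ultimately show "e \<in> U" using gf2_sum_mem_if_closed[OF closed] by blast
  qed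
  then show ?thesis unfolding flat_def gnd_PG2 using U subset_cl[of U "PG2 r"] gnd_PG2 by auto
qed

text \<open>If a sum of vectors from the two bases vanished, the part coming from \<open>BY - BF\<close> would
  also be a sum of vectors from \<open>BF\<close>, hence lie in \<open>F \<inter> Y\<close> and so be a sum of vectors from
  \<open>BI\<close>: a vanishing sum inside \<open>BY\<close>.\<close>

lemma indep_PG2_Un_bases:
  assumes F: "flat (PG2 r) F" and Y: "flat (PG2 r) Y"
    and BI: "BI \<subseteq> F \<inter> Y" "BI \<in> indep (PG2 r)" "card BI = rk (PG2 r) (F \<inter> Y)"
    and BF: "BI \<subseteq> BF" "BF \<subseteq> F" "BF \<in> indep (PG2 r)"
    and BY: "BI \<subseteq> BY" "BY \<subseteq> Y" "BY \<in> indep (PG2 r)"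
  shows "BF \<union> BY \<in> indep (PG2 r)"
  unfolding indep_PG2_iff
proof (intro conjI allI impI)
  have F_sub: "F \<subseteq> pg_ground r" and Y_sub: "Y \<subseteq> pg_ground r"
    using flat_subset_gnd[OF F] flat_subset_gnd[OF Y] gnd_PG2 by auto
  then show "BF \<union> BY \<subseteq> pg_ground r" using BF BY by auto
  fix G assume G: "G \<subseteq> BF \<union> BY" "G \<noteq> {}"
  show "gf2_sum G \<noteq> {}"
  proof
    assume sum_G: "gf2_sum G = {}"
    let ?G1 = "G \<inter> BF" and ?G2 = "G - BF"
    have fin: "finite ?G1" "finite ?G2"
      using G indep_finite[OF matroid_PG2 BF(3)] indep_finite[OF matroid_PG2 BY(3)]
      by (auto intro: finite_subset)
    have "?G1 \<inter> ?G2 = {}" by blast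
    then have "gf2_sum G = sym_diff (gf2_sum ?G1) (gf2_sum ?G2)"
      using gf2_sum_Un_disjoint[OF fin] by (simp add: Int_Diff_Un)
    then have sums_eq: "gf2_sum ?G1 = gf2_sum ?G2" using sum_G by auto
    have G2_BY: "?G2 \<subseteq> BY" using G by auto
    have G2_nonempty: "?G2 \<noteq> {}"
    proof
      assume "?G2 = {}"
      then have "G \<subseteq> BF" by blast
      then show False using BF(3) G sum_G unfolding indep_PG2_iff by blast
    qed
    then have nonzero: "gf2_sum ?G2 \<noteq> {}" using BY(3) G2_BY unfolding indep_PG2_iff by blast
    have "?G2 \<subseteq> Y" using G2_BY BY(2) by blast
    then have "gf2_sum ?G2 \<in> cl (PG2 r) Y" unfolding cl_PG2[OF Y_sub] using nonzero by blast
    moreover have "?G1 \<subseteq> F" using BF(2) by blast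
    then have "gf2_sum ?G2 \<in> cl (PG2 r) F" unfolding cl_PG2[OF F_sub] using nonzero sums_eq by blast
    ultimately have "gf2_sum ?G2 \<in> F \<inter> Y" using flat_cl_eq[OF F] flat_cl_eq[OF Y] by blast
    also have "F \<inter> Y \<subseteq> cl (PG2 r) BI"
      using subset_cl_basis[OF matroid_PG2 BI(1) _ BI(2,3)] F_sub gnd_PG2 by auto
    finally have "gf2_sum ?G2 \<in> cl (PG2 r) BI" .
    moreover have "BI \<subseteq> pg_ground r" using BI(1) F_sub by auto
    ultimately have "\<exists>H. gf2_sum ?G2 = gf2_sum H \<and> H \<subseteq> BI" by (simp add: cl_PG2)
    then obtain H where H: "H \<subseteq> BI" "gf2_sum H = gf2_sum ?G2" by metis
    have "finite H" using finite_subset[OF H(1) indep_finite[OF matroid_PG2 BI(2)]] .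
    moreover have "?G2 \<inter> H = {}" using H(1) BF(1) by blast
    ultimately have "gf2_sum (?G2 \<union> H) = {}" using gf2_sum_Un_disjoint[OF fin(2)] H(2) by simp
    moreover have "?G2 \<union> H \<subseteq> BY" "?G2 \<union> H \<noteq> {}" using G2_BY H BY(1) G2_nonempty by auto
    ultimately show False using BY(3) unfolding indep_PG2_iff by blast
  qed
qed

lemma modular_flat_PG2:
  assumes F: "flat (PG2 r) F"
  shows "modular_flat (PG2 r) F"
  unfolding modular_flat_def
proof (intro conjI allI impI F)
  let ?P = "PG2 r"
  fix Y assume Y: "flat ?P Y"
  obtain BI where BI: "BI \<subseteq> F \<inter> Y" "BI \<in> indep ?P" "card BI = rk ?P (F \<inter> Y)"
    using rk_basis[OF matroid_PG2] .
  obtain BF where BF: "BI \<subseteq> BF" "BF \<subseteq> F" "BF \<in> indep ?P" "card BF = rk ?P F"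
    using rk_basis_extend[OF matroid_PG2 BI(2), of F] BI by blast
  obtain BY where BY: "BI \<subseteq> BY" "BY \<subseteq> Y" "BY \<in> indep ?P" "card BY = rk ?P Y"
    using rk_basis_extend[OF matroid_PG2 BI(2), of Y] BI by blast
  have fin: "finite BF" "finite BY" using indep_finite[OF matroid_PG2] BF BY by auto
  have "card (BF \<inter> BY) \<le> card BI"
    using card_le_rk[OF matroid_PG2 matroidD(4)[OF matroid_PG2 BF(3)], of "BF \<inter> BY" "F \<inter> Y"] BF BY BI
    by auto
  then have "card (BF \<inter> BY) = card BI" using BF(1) BY(1) fin card_mono[of "BF \<inter> BY" BI] by auto
  moreover have "BF \<union> BY \<subseteq> F \<union> Y" using BF BY by auto
  then have "card (BF \<union> BY) \<le> rk ?P (F \<union> Y)"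
    using card_le_rk[OF matroid_PG2 indep_PG2_Un_bases[OF F Y BI BF(1-3) BY(1-3)]] by blast
  moreover have "card (BF \<union> BY) + card (BF \<inter> BY) = card BF + card BY" using card_Un_Int[OF fin] by simp
  ultimately show "rk ?P F + rk ?P Y = rk ?P (F \<union> Y) + rk ?P (F \<inter> Y)"
    using rk_submod[OF matroid_PG2, of F Y] BF(4) BY(4) BI(3) by linarith
qed

end

lemma circuit_PG2_replace_pair:
  assumes C: "circuit (PG2 r) C" and c: "c1 \<in> C" "c2 \<in> C" "c1 \<noteq> c2"
    and e: "e = sym_diff c1 c2" "e \<notin> C"
  shows "circuit (PG2 r) (insert e (C - {c1, c2}))"
proof -
  let ?R = "C - {c1, c2}"
  have C_props: "C \<subseteq> pg_ground r" "gf2_sum C = {}" "\<And>H. H \<subset> C \<Longrightarrow> H \<noteq> {} \<Longrightarrow> gf2_sum H \<noteq> {}"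
    using C unfolding circuit_PG2_iff by auto
  have sum_replace: "gf2_sum (insert e K) = gf2_sum (insert c1 (insert c2 K))" if K: "K \<subseteq> ?R" for K
  proof -
    have "finite K" using K C_props(1) finite_pg_ground by (meson Diff_subset finite_subset order.trans)
    moreover have "e \<notin> K" "c1 \<notin> K" "c2 \<notin> K" using K e(2) by auto
    ultimately have "gf2_sum (insert c1 (insert c2 K)) = sym_diff c1 (sym_diff c2 (gf2_sum K))"
      using gf2_sum_insert c(3) by simp
    then show ?thesis using gf2_sum_insert[OF \<open>finite K\<close> \<open>e \<notin> K\<close>] e(1) by auto
  qed
  show ?thesis
    unfolding circuit_PG2_iff
  proof (intro conjI allI impI)
    show "insert e ?R \<subseteq> pg_ground r" using sym_diff_in_pg_ground c C_props(1) e(1) by auto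
    show "insert e ?R \<noteq> {}" by simp
    have "insert c1 (insert c2 ?R) = C" using c by auto
    then show "gf2_sum (insert e ?R) = {}" using sum_replace[of ?R] C_props(2) by simp
    fix H assume H: "H \<subset> insert e ?R \<and> H \<noteq> {}"
    show "gf2_sum H \<noteq> {}"
    proof (cases "e \<in> H")
      case False
      then have "H \<subseteq> ?R" using H by blast
      then have "H \<subset> C" using c(1) by blast
      then show ?thesis using C_props(3) H by blast
    next
      case True
      obtain w where w: "w \<in> ?R" "w \<notin> H" using H True by blast
      have "H - {e} \<subseteq> ?R" using H by blast
      then have "gf2_sum H = gf2_sum (insert c1 (insert c2 (H - {e})))"
        using sum_replace[of "H - {e}"] insert_Diff[OF True] by simp
      moreover have "insert c1 (insert c2 (H - {e})) \<subset> C"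
        using \<open>H - {e} \<subseteq> ?R\<close> c w by blast
      ultimately show ?thesis using C_props(3) by simp
    qed
  qed
qed

lemma chordal_PG2: "chordal (PG2 r)"
  unfolding chordal_def
proof (intro allI impI)
  fix C assume "circuit (PG2 r) C \<and> 4 \<le> card C"
  then have C: "circuit (PG2 r) C" and card_C: "4 \<le> card C" by auto
  obtain c1 where c1: "c1 \<in> C" using card_C by fastforce
  then have "card (C - {c1}) \<noteq> 0" using card_C card_Diff_singleton[OF c1] by simp
  then obtain c2 where "c2 \<in> C - {c1}" by (metis card.empty ex_in_conv)
  then have c: "c1 \<in> C" "c2 \<in> C" "c1 \<noteq> c2" using c1 by auto
  define e where "e = sym_diff c1 c2"
  have "c1 \<in> pg_ground r" "c2 \<in> pg_ground r" using c C unfolding circuit_PG2_iff by auto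
  then have tri: "circuit (PG2 r) {c1, c2, e}" and "e \<noteq> c1" "e \<noteq> c2"
    using circuit_PG2_triangle c(3) unfolding e_def pg_ground_def by auto
  have "e \<notin> C"
  proof
    assume "e \<in> C"
    then have "{c1, c2, e} = C" using circuit_subset_eq[OF C tri] c by simp
    moreover have "card {c1, c2, e} \<le> 3" by (simp add: card_insert_le_m1)
    ultimately show False using card_C by simp
  qed
  then have "circuit (PG2 r) (insert e (C - {c1, c2}))"
    using circuit_PG2_replace_pair[OF C c e_def] by blast
  moreover have "{c1, c2, e} \<inter> insert e (C - {c1, c2}) = {e}" by auto
  moreover have "C = ({c1, c2, e} \<union> insert e (C - {c1, c2})) - {e}"
    using c \<open>e \<notin> C\<close> \<open>e \<noteq> c1\<close> \<open>e \<noteq> c2\<close> by auto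
  ultimately show "\<exists>C1 C2 e. circuit (PG2 r) C1 \<and> circuit (PG2 r) C2 \<and> C1 \<inter> C2 = {e} \<and> C = C1 \<union> C2 - {e}"
    using tri by blast
qed

lemma binary_pg_iso:
  assumes "binary_pg M"
  obtains r f where "matroid_iso M (PG2 r) f"
  using assms unfolding binary_pg_def iso_def matroid_iso_def by blast

lemma binary_pg_matroid: "binary_pg M \<Longrightarrow> matroid M"
  unfolding binary_pg_def by blast

lemma binary_pg_chordal: "binary_pg M \<Longrightarrow> chordal M"
  by (metis binary_pg_iso chordal_PG2 matroid_iso.chordal_if_chordal')

lemma binary_pg_modular_flat:
  assumes B: "binary_pg M" and F: "flat M F"
  shows "modular_flat M F"
proof -
  obtain r f where "matroid_iso M (PG2 r) f" using binary_pg_iso[OF B] .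
  then interpret matroid_iso M "PG2 r" f .
  have F_sub: "F \<subseteq> gnd M" using flat_subset_gnd[OF F] .
  then have "flat (PG2 r) (f ` F)" using flat_image_iff F by simp
  then have "modular_flat (PG2 r) (f ` F)" using modular_flat_PG2[OF matroid'] by blast
  then show ?thesis using modular_flat_image_iff[OF F_sub] by simp
qed

lemma binary_pg_triangle:
  assumes B: "binary_pg M" and x: "x \<in> gnd M" and y: "y \<in> gnd M" and xy: "x \<noteq> y"
  obtains z where "z \<in> gnd M" "z \<noteq> x" "z \<noteq> y" "circuit M {x, y, z}"
proof -
  obtain r f where "matroid_iso M (PG2 r) f" using binary_pg_iso[OF B] .
  then interpret matroid_iso M "PG2 r" f .
  have fx: "f x \<in> pg_ground r" and fy: "f y \<in> pg_ground r" using x y image_gnd gnd_PG2 by auto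
  have fxy: "f x \<noteq> f y" using inj_onD[OF inj] x y xy by blast
  then have "sym_diff (f x) (f y) \<in> gnd (PG2 r)" using sym_diff_in_pg_ground[OF fx fy] gnd_PG2 by simp
  then obtain z where z: "z \<in> gnd M" "f z = sym_diff (f x) (f y)" using image_gnd by (metis imageE)
  then have "circuit M {x, y, z}"
    using circuit_image_iff[of "{x, y, z}"] circuit_PG2_triangle[OF fx fy fxy] x y by simp
  moreover have "z \<noteq> x" "z \<noteq> y" using z fx fy unfolding pg_ground_def by auto
  ultimately show ?thesis using that z(1) by blast
qed

text \<open>A restriction of a binary projective geometry that is itself a binary projective geometry
  contains the third point of every line through two of its points, so it is a flat.\<close>

lemma binary_pg_restr_modular_flat:
  assumes B: "binary_pg M" and T: "T \<subseteq> gnd M" and BT: "binary_pg (restr M T)"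
  shows "modular_flat M T"
proof -
  obtain r f where "matroid_iso M (PG2 r) f" using binary_pg_iso[OF B] .
  then interpret matroid_iso M "PG2 r" f .
  have "\<forall>x'\<in>f ` T. \<forall>y'\<in>f ` T. x' \<noteq> y' \<longrightarrow> sym_diff x' y' \<in> f ` T"
  proof (intro ballI impI)
    fix x' y' assume "x' \<in> f ` T" "y' \<in> f ` T" "x' \<noteq> y'"
    then obtain x y where xy: "x \<in> T" "y \<in> T" "x' = f x" "y' = f y" "x \<noteq> y" by blast
    then obtain z where z: "z \<in> T" "z \<noteq> x" "z \<noteq> y" "circuit (restr M T) {x, y, z}"
      using binary_pg_triangle[OF BT, of x y] unfolding gnd_restr by blast
    have sub: "{x, y, z} \<subseteq> gnd M" using xy z T by auto
    have "circuit (PG2 r) (f ` {x, y, z})"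
      using circuit_image_iff[OF sub] circuit_restr[OF T z(4)] by simp
    moreover have "f x \<noteq> f y" "f x \<noteq> f z" "f y \<noteq> f z" using inj_onD[OF inj] sub xy z by blast+
    ultimately have "f z = sym_diff (f x) (f y)" using circuit_PG2_triangle_third by simp
    then show "sym_diff x' y' \<in> f ` T" using xy z by auto
  qed
  moreover have "f ` T \<subseteq> pg_ground r" using T image_gnd gnd_PG2 by auto
  ultimately have "flat (PG2 r) (f ` T)" using flat_PG2_if_sym_diff_closed[OF matroid'] by blast
  then show ?thesis using flat_image_iff[OF T] binary_pg_modular_flat[OF B] by simp
qed

section \<open>Modular flats\<close>

lemma modular_flatD:
  "modular_flat M T \<Longrightarrow> flat M Y \<Longrightarrow> rk M T + rk M Y = rk M (T \<union> Y) + rk M (T \<inter> Y)"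
  unfolding modular_flat_def by blast

lemma modular_flat_flat: "modular_flat M T \<Longrightarrow> flat M T"
  unfolding modular_flat_def by blast

lemma modular_flat_cl_Un_Int:
  assumes m: "matroid M" and T: "modular_flat M T" and A: "flat M A" and S: "flat M S"
    and AS: "A \<inter> T \<subseteq> S" and ST: "S \<subseteq> T"
  shows "cl M (A \<union> S) \<inter> T = S"
proof -
  let ?F = "cl M (A \<union> S)"
  have S_sub: "S \<subseteq> ?F \<inter> T"
    using subset_cl[of "A \<union> S" M] flat_subset_gnd[OF A] flat_subset_gnd[OF S] ST by auto
  have "(A \<union> S) \<union> T = T \<union> A" using ST by auto
  then have "rk M (T \<union> ?F) = rk M (T \<union> A)" using rk_cl_Un[OF m, of "A \<union> S" T] by (simp add: Un_commute)
  moreover have "A \<inter> S = T \<inter> A" using AS ST by auto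
  then have "rk M (A \<union> S) + rk M (T \<inter> A) \<le> rk M A + rk M S" using rk_submod[OF m, of A S] by simp
  moreover have "rk M T + rk M ?F = rk M (T \<union> ?F) + rk M (T \<inter> ?F)"
    using modular_flatD[OF T flat_cl[OF m]] .
  moreover have "rk M T + rk M A = rk M (T \<union> A) + rk M (T \<inter> A)" using modular_flatD[OF T A] .
  ultimately have "rk M (T \<inter> ?F) \<le> rk M S" using rk_cl[OF m, of "A \<union> S"] by linarith
  then have "?F \<inter> T \<subseteq> cl M S"
    using subset_cl_if_rk_le[OF m, of S "?F \<inter> T"] S_sub cl_subset_gnd[of M "A \<union> S"]
    by (auto simp: Int_commute)
  then show ?thesis using flat_cl_eq[OF S] S_sub by auto
qed

lemma modular_flat_rk_Un:
  assumes m: "matroid M" and T: "modular_flat M T" and F: "flat M F" and Y: "Y \<subseteq> T"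
  shows "rk M (F \<union> Y) + rk M (F \<inter> T) = rk M F + rk M ((F \<inter> T) \<union> Y)"
proof -
  have T_flat: "flat M T" using modular_flat_flat[OF T] .
  let ?S = "cl M ((F \<inter> T) \<union> Y)" and ?G = "cl M (F \<union> Y)"
  have "?S \<subseteq> T" using cl_subset_flat[OF m T_flat] Y by auto
  moreover have "F \<inter> T \<subseteq> ?S" using subset_cl[of "(F \<inter> T) \<union> Y" M] Y flat_subset_gnd[OF T_flat] by auto
  ultimately have "cl M (F \<union> ?S) \<inter> T = ?S"
    using modular_flat_cl_Un_Int[OF m T F flat_cl[OF m]] by blast
  moreover have "((F \<inter> T) \<union> Y) \<union> F = F \<union> Y" by auto
  then have "cl M (F \<union> ?S) = ?G" using cl_cl_Un[OF m, of "(F \<inter> T) \<union> Y" F] by (simp add: Un_commute)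
  ultimately have "rk M (T \<inter> ?G) = rk M ((F \<inter> T) \<union> Y)" using rk_cl[OF m] by (simp add: Int_commute)
  moreover have "(F \<union> Y) \<union> T = T \<union> F" using Y by auto
  then have "rk M (T \<union> ?G) = rk M (T \<union> F)" using rk_cl_Un[OF m, of "F \<union> Y" T] by (simp add: Un_commute)
  moreover have "rk M T + rk M ?G = rk M (T \<union> ?G) + rk M (T \<inter> ?G)"
    using modular_flatD[OF T flat_cl[OF m]] .
  moreover have "rk M T + rk M F = rk M (T \<union> F) + rk M (T \<inter> F)" using modular_flatD[OF T F] .
  ultimately show ?thesis using rk_cl[OF m, of "F \<union> Y"] by (simp add: Int_commute)
qed

text \<open>By modularity of \<open>T\<close>, deleting \<open>b\<close> from \<open>B\<close> lowers the rank of the trace of its span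
  on \<open>T\<close> by exactly one, so \<open>BT - {b}\<close> still spans that trace.\<close>

lemma modular_flat_cl_diff_Int:
  assumes m: "matroid M" and T: "modular_flat M T" and B: "B \<in> indep M"
    and BT: "BT \<subseteq> B" "BT \<subseteq> T" "card BT = rk M (cl M B \<inter> T)" and b: "b \<in> BT"
  shows "cl M (B - {b}) \<inter> T \<subseteq> cl M (BT - {b})"
proof -
  have finB: "finite B" using indep_finite[OF m B] .
  let ?A = "cl M (B - {b})" and ?Z = "cl M B"
  have "rk M ?A + 1 = card B"
    using rk_cl[OF m, of "B - {b}"] rk_indep[OF m matroidD(4)[OF m B]] card_Suc_Diff1[OF finB, of b] b BT
    by auto
  moreover have "rk M ?Z = card B" using rk_cl[OF m] rk_indep[OF m B] by simp
  moreover have "rk M (T \<union> ?A) = rk M (T \<union> ?Z)"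
  proof -
    have "rk M (T \<union> ?A) = rk M ((B - {b}) \<union> T)" using rk_cl_Un[OF m] by (simp add: Un_commute)
    also have "(B - {b}) \<union> T = B \<union> T" using b BT by auto
    finally show ?thesis using rk_cl_Un[OF m, of B T] by (simp add: Un_commute)
  qed
  moreover have "rk M T + rk M ?A = rk M (T \<union> ?A) + rk M (T \<inter> ?A)"
    using modular_flatD[OF T flat_cl[OF m]] .
  moreover have "rk M T + rk M ?Z = rk M (T \<union> ?Z) + rk M (T \<inter> ?Z)"
    using modular_flatD[OF T flat_cl[OF m]] .
  moreover have "rk M (T \<inter> ?Z) = card BT" using BT(3) by (simp add: Int_commute)
  ultimately have "rk M (T \<inter> ?A) + 1 = card BT" by linarith
  moreover have BT_indep: "BT - {b} \<in> indep M" using matroidD(4)[OF m B] BT by blast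
  moreover have "card (BT - {b}) + 1 = card BT"
    using card_Suc_Diff1[OF finite_subset[OF BT(1) finB] b] by simp
  ultimately have "rk M (?A \<inter> T) \<le> rk M (BT - {b})" using rk_indep[OF m BT_indep] by (simp add: Int_commute)
  moreover have "BT - {b} \<subseteq> ?A \<inter> T"
    using subset_cl[of "B - {b}" M] matroidD(2)[OF m B] BT by auto
  moreover have "?A \<inter> T \<subseteq> gnd M" using cl_subset_gnd[of M "B - {b}"] by blast
  ultimately show ?thesis using subset_cl_if_rk_le[OF m, of "BT - {b}" "?A \<inter> T"] by blast
qed

definition modular_matroid :: "'a matroid \<Rightarrow> bool" where
  "modular_matroid N \<longleftrightarrow> (\<forall>F. flat N F \<longrightarrow> modular_flat N F)"

lemma binary_pg_modular_matroid: "binary_pg N \<Longrightarrow> modular_matroid N"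
  unfolding modular_matroid_def using binary_pg_modular_flat by blast

lemma modular_matroid_rk_Un_disjoint:
  assumes m: "matroid N" and N: "modular_matroid N" and S: "flat N S" and Y: "flat N Y"
    and disj: "S \<inter> Y = {}"
  shows "rk N (S \<union> Y) = rk N S + rk N Y"
  using modular_flatD[OF N[unfolded modular_matroid_def, rule_format, OF S] Y] disj rk_empty[OF m]
  by simp

definition pg_restrictions_modular :: "'a matroid \<Rightarrow> bool" where
  "pg_restrictions_modular M \<longleftrightarrow> (\<forall>S\<subseteq>gnd M. binary_pg (restr M S) \<longrightarrow> modular_flat M S)"

section \<open>Generalized parallel connection\<close>

locale parallel_connection =
  fixes M1 M2 M :: "'a matroid" and T :: "'a set"
  assumes matroid1: "matroid M1" and matroid2: "matroid M2" and matroid: "matroid M"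
    and gnd_M: "gnd M = gnd M1 \<union> gnd M2"
    and T_eq: "T = gnd M1 \<inter> gnd M2"
    and modular1: "modular_flat M1 T" and modular2: "modular_flat M2 T"
    and restr_T: "restr M1 T = restr M2 T"
    and flat_iff: "\<And>Z. flat M Z \<longleftrightarrow> Z \<subseteq> gnd M \<and> flat M1 (Z \<inter> gnd M1) \<and> flat M2 (Z \<inter> gnd M2)"
begin

lemma swap: "parallel_connection M2 M1 M T"
proof
  show "gnd M = gnd M2 \<union> gnd M1" "T = gnd M2 \<inter> gnd M1" using gnd_M T_eq by auto
  show "flat M Z \<longleftrightarrow> Z \<subseteq> gnd M \<and> flat M2 (Z \<inter> gnd M2) \<and> flat M1 (Z \<inter> gnd M1)" for Z
    using flat_iff by blast
qed (use matroid1 matroid2 matroid modular1 modular2 restr_T in simp_all)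

lemma T_subset1: "T \<subseteq> gnd M1" and T_subset2: "T \<subseteq> gnd M2"
  using T_eq by auto

lemma flat1_T: "flat M1 T" and flat2_T: "flat M2 T"
  using modular_flat_flat[OF modular1] modular_flat_flat[OF modular2] by auto

lemma indep_T_iff: "I \<subseteq> T \<Longrightarrow> I \<in> indep M1 \<longleftrightarrow> I \<in> indep M2"
  using arg_cong[OF restr_T, of indep] unfolding indep_restr by blast

lemma rk_T_eq: "X \<subseteq> T \<Longrightarrow> rk M1 X = rk M2 X"
  using rk_restr[of X T M1] rk_restr[of X T M2] restr_T by simp

lemma cl_Int_T_eq: "X \<subseteq> T \<Longrightarrow> cl M1 X \<inter> T = cl M2 X \<inter> T"
  using cl_restr[OF T_subset1, of X] cl_restr[OF T_subset2, of X] restr_T by simp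

lemma flat1_if_flat2:
  assumes S: "flat M2 S" and ST: "S \<subseteq> T"
  shows "flat M1 S"
proof -
  have "cl M1 S = cl M1 S \<inter> T" using cl_subset_flat[OF matroid1 flat1_T ST] by auto
  also have "\<dots> = S" using cl_Int_T_eq[OF ST] flat_cl_eq[OF S] ST by auto
  finally show ?thesis unfolding flat_def using ST T_subset1 by auto
qed

lemma flat1_Int_T: "flat M2 F \<Longrightarrow> flat M1 (F \<inter> T)"
  using flat1_if_flat2 flat_Int[OF matroid2 _ flat2_T] by blast

lemma flat2_Int_T: "flat M1 F \<Longrightarrow> flat M2 (F \<inter> T)"
  using parallel_connection.flat1_Int_T[OF swap] .

lemma flat_Un:
  assumes P1: "flat M1 P1" and P2: "flat M2 P2" and P12: "P1 \<inter> T = P2 \<inter> T"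
  shows "flat M (P1 \<union> P2)"
proof -
  have "P1 \<subseteq> gnd M1" "P2 \<subseteq> gnd M2" using flat_subset_gnd[OF P1] flat_subset_gnd[OF P2] .
  then have "(P1 \<union> P2) \<inter> gnd M1 = P1" "(P1 \<union> P2) \<inter> gnd M2 = P2" using P12 T_eq by auto
  then show ?thesis unfolding flat_iff using P1 P2 gnd_M \<open>P1 \<subseteq> gnd M1\<close> \<open>P2 \<subseteq> gnd M2\<close> by auto
qed

lemma flat_gnd1: "flat M (gnd M1)"
proof -
  have "gnd M1 \<inter> T = T \<inter> T" using T_subset1 by auto
  then have "flat M (gnd M1 \<union> T)" by (rule flat_Un[OF flat_gnd[OF matroid1] flat2_T])
  then show ?thesis using T_subset1 by (simp add: Un_absorb2)
qed

lemma cl_side1: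
  assumes X: "X \<subseteq> gnd M1"
  shows "cl M X = cl M1 X"
proof
  let ?Z = "cl M1 X"
  have Z_flat: "flat M1 ?Z" by (rule flat_cl[OF matroid1])
  have "flat M (?Z \<union> (?Z \<inter> T))" by (rule flat_Un[OF Z_flat flat2_Int_T[OF Z_flat]]) auto
  then have "flat M ?Z" by (metis Int_lower1 Un_absorb2)
  then show "cl M X \<subseteq> ?Z" using cl_subset_flat[OF matroid] subset_cl[OF X] by blast
  have "flat M1 (cl M X \<inter> gnd M1)" using flat_iff flat_cl[OF matroid] by blast
  moreover have "X \<subseteq> cl M X \<inter> gnd M1" using subset_cl[of X M] X gnd_M by auto
  ultimately show "?Z \<subseteq> cl M X" using cl_subset_flat[OF matroid1] by blast
qed

lemma indep_side1:
  assumes I: "I \<subseteq> gnd M1"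
  shows "I \<in> indep M \<longleftrightarrow> I \<in> indep M1"
proof -
  have "cl M (I - {x}) = cl M1 (I - {x})" for x using cl_side1 I by blast
  moreover have "I \<subseteq> gnd M" using I gnd_M by auto
  ultimately show ?thesis
    using indep_iff_not_mem_cl[OF matroid] indep_iff_not_mem_cl[OF matroid1 I] by simp
qed

lemma indep_subset_side1:
  assumes X: "X \<subseteq> gnd M1"
  shows "I \<in> indep M \<and> I \<subseteq> X \<longleftrightarrow> I \<in> indep M1 \<and> I \<subseteq> X"
proof (cases "I \<subseteq> X")
  case True
  then show ?thesis using indep_side1[OF order.trans[OF True X]] by simp
qed simp

lemma circuit_side1:
  assumes C: "C \<subseteq> gnd M1"
  shows "circuit M C \<longleftrightarrow> circuit M1 C"
proof -
  have "C \<subseteq> gnd M" using C gnd_M by auto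
  then show ?thesis
    unfolding circuit_def using indep_subset_side1[OF C] C by (auto simp: psubset_eq)
qed

lemma rk_side1: "X \<subseteq> gnd M1 \<Longrightarrow> rk M X = rk M1 X"
  unfolding rk_def using indep_subset_side1 by simp

lemma restr_side1: "X \<subseteq> gnd M1 \<Longrightarrow> restr M X = restr M1 X"
  unfolding restr_def using indep_subset_side1 by simp

lemmas flat_gnd2 = parallel_connection.flat_gnd1[OF swap]
lemmas cl_side2 = parallel_connection.cl_side1[OF swap]
lemmas indep_side2 = parallel_connection.indep_side1[OF swap]
lemmas circuit_side2 = parallel_connection.circuit_side1[OF swap]
lemmas restr_side2 = parallel_connection.restr_side1[OF swap]

lemma cl2_Un_Int_T:
  assumes A: "flat M1 A" and Y: "flat M2 Y" and YA: "Y \<inter> T \<subseteq> A"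
  shows "cl M2 (Y \<union> (A \<inter> T)) \<inter> T = A \<inter> T"
proof -
  have "Y \<inter> T \<subseteq> A \<inter> T" using YA by blast
  then show ?thesis using modular_flat_cl_Un_Int[OF matroid2 modular2 Y flat2_Int_T[OF A]] by blast
qed

lemma cl_Int_T_basis:
  assumes B: "B \<in> indep M1" and span: "card (B \<inter> T) = rk M1 (cl M1 B \<inter> T)"
  shows "cl M1 B \<inter> T = cl M1 (B \<inter> T) \<inter> T"
proof
  have "B \<inter> T \<subseteq> cl M1 B \<inter> T" using subset_cl[of B M1] matroidD(2)[OF matroid1 B] by auto
  moreover have "cl M1 B \<inter> T \<subseteq> gnd M1" using cl_subset_gnd[of M1 B] by blast
  moreover have "B \<inter> T \<in> indep M1" using matroidD(4)[OF matroid1 B] by blast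
  ultimately have "cl M1 B \<inter> T \<subseteq> cl M1 (B \<inter> T)" using subset_cl_basis[OF matroid1 _ _ _ span] by blast
  then show "cl M1 B \<inter> T \<subseteq> cl M1 (B \<inter> T) \<inter> T" by blast
  show "cl M1 (B \<inter> T) \<inter> T \<subseteq> cl M1 B \<inter> T" using cl_mono[OF matroid1, of "B \<inter> T" B] by blast
qed

text \<open>Independent sets of the two sides with a common trace on \<open>T\<close> that spans the traces of
  their spans glue to an independent set of \<open>M\<close>: each element \<open>b\<close> avoids a flat \<open>P1 \<union> P2\<close>
  of \<open>M\<close> containing all the others.\<close>

lemma not_mem_cl_delete_side1:
  assumes B1: "B1 \<in> indep M1" and B2: "B2 \<in> indep M2" and traces: "B1 \<inter> T = B2 \<inter> T"
    and span1: "card (B1 \<inter> T) = rk M1 (cl M1 B1 \<inter> T)"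
    and span2: "card (B2 \<inter> T) = rk M2 (cl M2 B2 \<inter> T)"
    and b: "b \<in> B1" "b \<notin> T"
  shows "b \<notin> cl M (B1 \<union> B2 - {b})"
proof -
  let ?P1 = "cl M1 (B1 - {b})" and ?P2 = "cl M2 B2"
  have "?P2 \<inter> T = cl M2 (B2 \<inter> T) \<inter> T"
    using parallel_connection.cl_Int_T_basis[OF swap B2 span2] .
  also have "\<dots> = cl M1 (B1 \<inter> T) \<inter> T" using cl_Int_T_eq[of "B1 \<inter> T"] traces by auto
  finally have P2_T: "?P2 \<inter> T = cl M1 (B1 \<inter> T) \<inter> T" .
  have "?P1 \<inter> T \<subseteq> cl M1 B1 \<inter> T" using cl_mono[OF matroid1, of "B1 - {b}" B1] by blast
  moreover have "cl M1 (B1 \<inter> T) \<subseteq> ?P1" using cl_mono[OF matroid1, of "B1 \<inter> T" "B1 - {b}"] b by blast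
  ultimately have "?P1 \<inter> T = ?P2 \<inter> T" using P2_T cl_Int_T_basis[OF B1 span1] by blast
  then have "flat M (?P1 \<union> ?P2)" by (rule flat_Un[OF flat_cl[OF matroid1] flat_cl[OF matroid2]])
  moreover have "b \<notin> gnd M2" using b matroidD(2)[OF matroid1 B1] T_eq by blast
  then have "B1 \<union> B2 - {b} \<subseteq> ?P1 \<union> ?P2"
    using subset_cl[of "B1 - {b}" M1] subset_cl[of B2 M2] matroidD(2)[OF matroid1 B1]
      matroidD(2)[OF matroid2 B2] by blast
  ultimately have "cl M (B1 \<union> B2 - {b}) \<subseteq> ?P1 \<union> ?P2" using cl_subset_flat[OF matroid] by blast
  moreover have "b \<notin> ?P1"
    using indep_iff_not_mem_cl[OF matroid1 matroidD(2)[OF matroid1 B1]] B1 b by blast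
  moreover have "b \<notin> ?P2" using \<open>b \<notin> gnd M2\<close> cl_subset_gnd[of M2 B2] by blast
  ultimately show ?thesis by blast
qed

lemma not_mem_cl_delete_T:
  assumes B1: "B1 \<in> indep M1" and B2: "B2 \<in> indep M2" and traces: "B1 \<inter> T = B2 \<inter> T"
    and span1: "card (B1 \<inter> T) = rk M1 (cl M1 B1 \<inter> T)"
    and span2: "card (B2 \<inter> T) = rk M2 (cl M2 B2 \<inter> T)"
    and b: "b \<in> B1 \<inter> T"
  shows "b \<notin> cl M (B1 \<union> B2 - {b})"
proof -
  let ?BT = "B1 \<inter> T - {b}" and ?P1 = "cl M1 (B1 - {b})" and ?P2 = "cl M2 (B2 - {b})"
  have b2: "b \<in> B2 \<inter> T" using b traces by simp
  have "?P1 \<inter> T \<subseteq> cl M1 ?BT"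
    by (rule modular_flat_cl_diff_Int[OF matroid1 modular1 B1 Int_lower1 Int_lower2 span1 b])
  moreover have "?P2 \<inter> T \<subseteq> cl M2 (B2 \<inter> T - {b})"
    by (rule modular_flat_cl_diff_Int[OF matroid2 modular2 B2 Int_lower1 Int_lower2 span2 b2])
  then have "?P2 \<inter> T \<subseteq> cl M2 ?BT" using traces by simp
  moreover have "cl M1 ?BT \<inter> T = cl M2 ?BT \<inter> T" by (rule cl_Int_T_eq) blast
  moreover have "cl M1 ?BT \<subseteq> ?P1" by (rule cl_mono[OF matroid1]) blast
  moreover have "?BT \<subseteq> B2 - {b}" using traces by blast
  then have "cl M2 ?BT \<subseteq> ?P2" by (rule cl_mono[OF matroid2])
  ultimately have "?P1 \<inter> T = ?P2 \<inter> T" by blast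
  then have "flat M (?P1 \<union> ?P2)" by (rule flat_Un[OF flat_cl[OF matroid1] flat_cl[OF matroid2]])
  moreover have "B1 - {b} \<subseteq> ?P1" "B2 - {b} \<subseteq> ?P2"
    using subset_cl[of "B1 - {b}" M1] subset_cl[of "B2 - {b}" M2] matroidD(2)[OF matroid1 B1]
      matroidD(2)[OF matroid2 B2] by auto
  then have "B1 \<union> B2 - {b} \<subseteq> ?P1 \<union> ?P2" by blast
  ultimately have "cl M (B1 \<union> B2 - {b}) \<subseteq> ?P1 \<union> ?P2" using cl_subset_flat[OF matroid] by blast
  moreover have "b \<notin> ?P1"
    using indep_iff_not_mem_cl[OF matroid1 matroidD(2)[OF matroid1 B1]] B1 b by blast
  moreover have "b \<notin> ?P2"
    using indep_iff_not_mem_cl[OF matroid2 matroidD(2)[OF matroid2 B2]] B2 b traces by blast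
  ultimately show ?thesis by blast
qed

lemma indep_Un_sides:
  assumes B1: "B1 \<in> indep M1" and B2: "B2 \<in> indep M2" and traces: "B1 \<inter> T = B2 \<inter> T"
    and span1: "card (B1 \<inter> T) = rk M1 (cl M1 B1 \<inter> T)"
    and span2: "card (B2 \<inter> T) = rk M2 (cl M2 B2 \<inter> T)"
  shows "B1 \<union> B2 \<in> indep M"
proof -
  have sub: "B1 \<union> B2 \<subseteq> gnd M" using matroidD(2)[OF matroid1 B1] matroidD(2)[OF matroid2 B2] gnd_M by auto
  have "b \<notin> cl M (B1 \<union> B2 - {b})" if b: "b \<in> B1 \<union> B2" for b
  proof -
    consider "b \<in> B1" "b \<notin> T" | "b \<in> B2" "b \<notin> T" | "b \<in> B1 \<inter> T" using b traces by blast
    then show ?thesis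
    proof cases
      case 1
      then show ?thesis using not_mem_cl_delete_side1[OF B1 B2 traces span1 span2] by blast
    next
      case 2
      then show ?thesis
        using parallel_connection.not_mem_cl_delete_side1[OF swap B2 B1 traces[symmetric] span2 span1]
        by (simp add: Un_commute)
    next
      case 3
      then show ?thesis using not_mem_cl_delete_T[OF B1 B2 traces span1 span2] by blast
    qed
  qed
  then show ?thesis using indep_iff_not_mem_cl[OF matroid sub] by blast
qed

lemma flat_side_bases:
  assumes Z: "flat M Z"
  obtains B1 B2 where "B1 \<in> indep M1" "B2 \<in> indep M2" "B1 \<inter> T = B2 \<inter> T"
    "cl M1 B1 = Z \<inter> gnd M1" "cl M2 B2 = Z \<inter> gnd M2" "card (B1 \<inter> T) = rk M1 (Z \<inter> T)"
    "card B1 = rk M1 (Z \<inter> gnd M1)" "card B2 = rk M2 (Z \<inter> gnd M2)"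
proof -
  let ?Z1 = "Z \<inter> gnd M1" and ?Z2 = "Z \<inter> gnd M2" and ?ZT = "Z \<inter> T"
  have Z1: "flat M1 ?Z1" and Z2: "flat M2 ?Z2" using Z flat_iff by auto
  obtain BT where BT: "BT \<subseteq> ?ZT" "BT \<in> indep M1" "card BT = rk M1 ?ZT" using rk_basis[OF matroid1] .
  have "BT \<subseteq> T" using BT(1) by blast
  then have BT2: "BT \<in> indep M2" "card BT = rk M2 ?ZT"
    using indep_T_iff[of BT] rk_T_eq[of ?ZT] BT(2,3) by auto
  have "BT \<subseteq> ?Z1" "BT \<subseteq> ?Z2" using BT(1) T_eq by auto
  obtain B1 where B1: "BT \<subseteq> B1" "B1 \<subseteq> ?Z1" "B1 \<in> indep M1" "card B1 = rk M1 ?Z1"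
    by (rule rk_basis_extend[OF matroid1 BT(2) \<open>BT \<subseteq> ?Z1\<close>])
  obtain B2 where B2: "BT \<subseteq> B2" "B2 \<subseteq> ?Z2" "B2 \<in> indep M2" "card B2 = rk M2 ?Z2"
    by (rule rk_basis_extend[OF matroid2 BT2(1) \<open>BT \<subseteq> ?Z2\<close>])
  have "B1 \<inter> ?ZT = BT" using Int_eq_if_card_eq_rk[OF matroid1 B1(3) _ BT(3)] B1(1) BT(1) by blast
  then have B1_T: "B1 \<inter> T = BT" using B1(2) by blast
  have "B2 \<inter> ?ZT = BT" using Int_eq_if_card_eq_rk[OF matroid2 B2(3) _ BT2(2)] B2(1) BT(1) by blast
  then have B2_T: "B2 \<inter> T = BT" using B2(2) by blast
  have "cl M1 B1 = ?Z1"
    using subset_cl_basis[OF matroid1 B1(2) flat_subset_gnd[OF Z1] B1(3,4)] cl_subset_flat[OF matroid1 Z1 B1(2)]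
    by blast
  moreover have "cl M2 B2 = ?Z2"
    using subset_cl_basis[OF matroid2 B2(2) flat_subset_gnd[OF Z2] B2(3,4)] cl_subset_flat[OF matroid2 Z2 B2(2)]
    by blast
  ultimately show ?thesis using that B1(3,4) B2(3,4) B1_T B2_T BT(3) by simp
qed

lemma rk_flat:
  assumes Z: "flat M Z"
  shows "rk M Z + rk M1 (Z \<inter> T) = rk M1 (Z \<inter> gnd M1) + rk M2 (Z \<inter> gnd M2)"
proof -
  obtain B1 B2 where B: "B1 \<in> indep M1" "B2 \<in> indep M2" "B1 \<inter> T = B2 \<inter> T"
    "cl M1 B1 = Z \<inter> gnd M1" "cl M2 B2 = Z \<inter> gnd M2" "card (B1 \<inter> T) = rk M1 (Z \<inter> T)"
    "card B1 = rk M1 (Z \<inter> gnd M1)" "card B2 = rk M2 (Z \<inter> gnd M2)"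
    using flat_side_bases[OF Z] .
  have "cl M1 B1 \<inter> T = Z \<inter> T" "cl M2 B2 \<inter> T = Z \<inter> T" using B(4,5) T_eq by auto
  then have span: "card (B1 \<inter> T) = rk M1 (cl M1 B1 \<inter> T)" "card (B2 \<inter> T) = rk M2 (cl M2 B2 \<inter> T)"
    using B(3,6) rk_T_eq[of "Z \<inter> T"] by auto
  have indep: "B1 \<union> B2 \<in> indep M" using indep_Un_sides[OF B(1-3) span] .
  have sub1: "B1 \<subseteq> gnd M1" and sub2: "B2 \<subseteq> gnd M2"
    using matroidD(2)[OF matroid1 B(1)] matroidD(2)[OF matroid2 B(2)] .
  have "Z = cl M B1 \<union> cl M B2" using B(4,5) cl_side1[OF sub1] cl_side2[OF sub2] flat_subset_gnd[OF Z] gnd_M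
    by auto
  also have "\<dots> \<subseteq> cl M (B1 \<union> B2)" using cl_mono[OF matroid] by (metis Un_least Un_upper1 Un_upper2)
  finally have "rk M Z \<le> card (B1 \<union> B2)"
    using rk_mono[OF matroid] rk_cl[OF matroid] rk_indep[OF matroid indep] by metis
  moreover have "B1 \<union> B2 \<subseteq> Z"
    using subset_cl[OF sub1] subset_cl[OF sub2] B(4,5) by blast
  then have "card (B1 \<union> B2) \<le> rk M Z" using card_le_rk[OF matroid indep] by blast
  moreover have "B1 \<inter> B2 = B1 \<inter> T" using B(3) sub1 sub2 T_eq by blast
  then have "card (B1 \<union> B2) + card (B1 \<inter> T) = card B1 + card B2"
    using card_Un_Int[OF indep_finite[OF matroid1 B(1)] indep_finite[OF matroid2 B(2)]] by simp
  ultimately show ?thesis using B(6-8) by linarith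
qed

lemma cl_Un_side1:
  assumes F: "F \<subseteq> gnd M1" and Y: "flat M Y"
  defines "A \<equiv> cl M1 (F \<union> (Y \<inter> gnd M1))"
  defines "P \<equiv> cl M2 ((Y \<inter> gnd M2) \<union> (A \<inter> T))"
  shows "cl M (F \<union> Y) = A \<union> P" "P \<inter> T = A \<inter> T"
proof -
  let ?G = "cl M (F \<union> Y)"
  have A: "flat M1 A" unfolding A_def by (rule flat_cl[OF matroid1])
  have P: "flat M2 P" unfolding P_def by (rule flat_cl[OF matroid2])
  have Y2: "flat M2 (Y \<inter> gnd M2)" using Y flat_iff by blast
  have FY_A: "F \<union> (Y \<inter> gnd M1) \<subseteq> A" unfolding A_def by (rule subset_cl) (use F in blast)
  then have "Y \<inter> gnd M2 \<inter> T \<subseteq> A" using T_eq by blast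
  then show PT: "P \<inter> T = A \<inter> T" unfolding P_def by (rule cl2_Un_Int_T[OF A Y2])
  have P_sup: "(Y \<inter> gnd M2) \<union> (A \<inter> T) \<subseteq> P" unfolding P_def by (rule subset_cl) (use T_subset2 in blast)
  have "flat M (A \<union> P)" by (rule flat_Un[OF A P PT[symmetric]])
  moreover have "F \<union> Y \<subseteq> A \<union> P" using FY_A P_sup flat_subset_gnd[OF Y] gnd_M by blast
  ultimately have "?G \<subseteq> A \<union> P" by (rule cl_subset_flat[OF matroid])
  have "flat M ?G" by (rule flat_cl[OF matroid])
  then have G1: "flat M1 (?G \<inter> gnd M1)" and G2: "flat M2 (?G \<inter> gnd M2)" using flat_iff by blast+
  have FY_G: "F \<union> Y \<subseteq> ?G" by (rule subset_cl) (use F flat_subset_gnd[OF Y] gnd_M in blast)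
  have A_G: "A \<subseteq> ?G \<inter> gnd M1" unfolding A_def by (rule cl_subset_flat[OF matroid1 G1]) (use FY_G F in blast)
  have "P \<subseteq> ?G \<inter> gnd M2" unfolding P_def by (rule cl_subset_flat[OF matroid2 G2]) (use FY_G A_G T_eq in blast)
  with \<open>?G \<subseteq> A \<union> P\<close> A_G show "?G = A \<union> P" by blast
qed

lemma modular_flat_side1:
  assumes F: "modular_flat M1 F"
  shows "modular_flat M F"
  unfolding modular_flat_def
proof (intro conjI allI impI)
  have F1: "flat M1 F" using modular_flat_flat[OF F] .
  have F_sub: "F \<subseteq> gnd M1" using flat_subset_gnd[OF F1] .
  have "F \<inter> gnd M1 = F" "F \<inter> gnd M2 = F \<inter> T" using F_sub T_eq by blast+
  then show "flat M F" unfolding flat_iff using F1 flat2_Int_T[OF F1] F_sub gnd_M by auto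
  fix Y assume Y: "flat M Y"
  let ?Y1 = "Y \<inter> gnd M1" and ?Y2 = "Y \<inter> gnd M2"
  have Y1: "flat M1 ?Y1" and Y2: "flat M2 ?Y2" using Y flat_iff by blast+
  define A where "A = cl M1 (F \<union> ?Y1)"
  define P where "P = cl M2 (?Y2 \<union> (A \<inter> T))"
  have G: "cl M (F \<union> Y) = A \<union> P" and PT: "P \<inter> T = A \<inter> T"
    using cl_Un_side1[OF F_sub Y] unfolding A_def P_def by blast+
  have A_sub: "A \<subseteq> gnd M1" unfolding A_def by (rule cl_subset_gnd)
  have P_sub: "P \<subseteq> gnd M2" unfolding P_def by (rule cl_subset_gnd)
  have P: "flat M2 P" unfolding P_def by (rule flat_cl[OF matroid2])
  have "flat M (A \<union> P)" using G flat_cl[OF matroid] by metis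
  moreover have "(A \<union> P) \<inter> gnd M1 = A" "(A \<union> P) \<inter> gnd M2 = P" "(A \<union> P) \<inter> T = A \<inter> T"
    using A_sub P_sub PT T_eq by blast+
  ultimately have rk_G: "rk M (A \<union> P) + rk M1 (A \<inter> T) = rk M1 A + rk M2 P" using rk_flat by metis
  have rk_Y: "rk M Y + rk M1 (Y \<inter> T) = rk M1 ?Y1 + rk M2 ?Y2" by (rule rk_flat[OF Y])
  have mod_P: "rk M2 T + rk M2 P = rk M2 (T \<union> P) + rk M2 (T \<inter> P)" by (rule modular_flatD[OF modular2 P])
  have mod_Y: "rk M2 T + rk M2 ?Y2 = rk M2 (T \<union> ?Y2) + rk M2 (T \<inter> ?Y2)" by (rule modular_flatD[OF modular2 Y2])
  have "(?Y2 \<union> (A \<inter> T)) \<union> T = T \<union> ?Y2" by blast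
  then have "rk M2 (T \<union> P) = rk M2 (T \<union> ?Y2)"
    using rk_cl_Un[OF matroid2, of "?Y2 \<union> (A \<inter> T)" T] unfolding P_def by (simp add: Un_commute)
  moreover have "T \<inter> P = A \<inter> T" "T \<inter> ?Y2 = Y \<inter> T" using PT T_eq by blast+
  then have "rk M2 (T \<inter> P) = rk M1 (A \<inter> T)" "rk M2 (T \<inter> ?Y2) = rk M1 (Y \<inter> T)"
    using rk_T_eq[of "A \<inter> T"] rk_T_eq[of "Y \<inter> T"] by simp_all
  moreover have "rk M1 F + rk M1 ?Y1 = rk M1 (F \<union> ?Y1) + rk M1 (F \<inter> ?Y1)"
    by (rule modular_flatD[OF F Y1])
  moreover have "rk M1 A = rk M1 (F \<union> ?Y1)" unfolding A_def by (rule rk_cl[OF matroid1])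
  moreover have "F \<inter> Y = F \<inter> ?Y1" using F_sub by blast
  then have "rk M F = rk M1 F" "rk M (F \<inter> Y) = rk M1 (F \<inter> ?Y1)"
    using rk_side1[OF F_sub] rk_side1[of "F \<inter> ?Y1"] by auto
  moreover have "rk M (F \<union> Y) = rk M (A \<union> P)" using G rk_cl[OF matroid] by metis
  ultimately show "rk M F + rk M Y = rk M (F \<union> Y) + rk M (F \<inter> Y)"
    using rk_G rk_Y mod_P mod_Y by linarith
qed

lemmas modular_flat_side2 = parallel_connection.modular_flat_side1[OF swap]

lemma binary_pg_restr_side:
  assumes S: "S \<subseteq> gnd M" and B: "binary_pg (restr M S)"
  shows "S \<subseteq> gnd M1 \<or> S \<subseteq> gnd M2"
proof (rule ccontr)
  assume "\<not> (S \<subseteq> gnd M1 \<or> S \<subseteq> gnd M2)"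
  then obtain x y where x: "x \<in> S" "x \<notin> gnd M2" and y: "y \<in> S" "y \<notin> gnd M1" by blast
  then have "x \<in> gnd M1" "y \<in> gnd M2" "x \<noteq> y" using S gnd_M by auto
  then obtain z where z: "z \<in> S" "circuit (restr M S) {x, y, z}"
    using binary_pg_triangle[OF B, of x y] x y unfolding gnd_restr by blast
  have C: "circuit M {x, y, z}" using circuit_restr[OF S z(2)] .
  show False
  proof (cases "z \<in> gnd M1")
    case True
    then have "y \<in> gnd M1"
      using circuit_mem_flat[OF matroid C flat_gnd1, of y] \<open>x \<in> gnd M1\<close> by blast
    then show False using y by blast
  next
    case False
    then have "x \<in> gnd M2"
      using circuit_mem_flat[OF matroid C flat_gnd2, of x] \<open>y \<in> gnd M2\<close> z(1) S gnd_M by blast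
    then show False using x by blast
  qed
qed

lemma pg_restrictions_modular_if_sides:
  assumes "pg_restrictions_modular M1" "pg_restrictions_modular M2"
  shows "pg_restrictions_modular M"
  unfolding pg_restrictions_modular_def
proof (intro allI impI)
  fix S assume S: "S \<subseteq> gnd M" and B: "binary_pg (restr M S)"
  then consider "S \<subseteq> gnd M1" | "S \<subseteq> gnd M2" using binary_pg_restr_side by blast
  then show "modular_flat M S"
  proof cases
    case 1
    then show ?thesis using assms(1) B restr_side1 modular_flat_side1 unfolding pg_restrictions_modular_def
      by metis
  next
    case 2
    then show ?thesis using assms(2) B restr_side2 modular_flat_side2 unfolding pg_restrictions_modular_def
      by metis
  qed
qed

lemma rk_Un_trace_disjoint:
  assumes N: "modular_matroid (restr M1 T)" and X: "X \<in> indep M1"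
    and Y: "flat M1 Y" "Y \<subseteq> T" and disj: "cl M1 X \<inter> Y = {}"
  shows "rk M1 (X \<union> Y) = card X + rk M1 Y"
proof -
  let ?F = "cl M1 X"
  have F: "flat M1 ?F" by (rule flat_cl[OF matroid1])
  have FT: "flat M1 (?F \<inter> T)" by (rule flat_Int[OF matroid1 F flat1_T])
  have "matroid (restr M1 T)" by (rule matroid_restr[OF matroid1 T_subset1])
  moreover have "flat (restr M1 T) (?F \<inter> T)" "flat (restr M1 T) Y"
    using flat_restr[OF T_subset1 FT] flat_restr[OF T_subset1 Y(1) Y(2)] by blast+
  moreover have "(?F \<inter> T) \<inter> Y = {}" using disj by blast
  ultimately have "rk (restr M1 T) ((?F \<inter> T) \<union> Y) = rk (restr M1 T) (?F \<inter> T) + rk (restr M1 T) Y"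
    using modular_matroid_rk_Un_disjoint N by blast
  then have "rk M1 ((?F \<inter> T) \<union> Y) = rk M1 (?F \<inter> T) + rk M1 Y" using rk_restr Y(2) by (metis Int_lower2 Un_least)
  moreover have "rk M1 (?F \<union> Y) + rk M1 (?F \<inter> T) = rk M1 ?F + rk M1 ((?F \<inter> T) \<union> Y)"
    by (rule modular_flat_rk_Un[OF matroid1 modular1 F Y(2)])
  moreover have "rk M1 ?F = card X" using rk_cl[OF matroid1] rk_indep[OF matroid1 X] by simp
  moreover have "rk M1 (X \<union> Y) = rk M1 (?F \<union> Y)" using rk_cl_Un[OF matroid1] by simp
  ultimately show ?thesis by linarith
qed

text \<open>If the spans of the two parts of a circuit met in no point of \<open>T\<close>, their traces on \<open>T\<close>
  would be skew; but a point \<open>x0\<close> of the first part lies in the span of the rest of the circuit,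
  which is a flat \<open>P1 \<union> P2\<close> of \<open>M\<close> whose first side has too small a rank to contain \<open>x0\<close>.\<close>

lemma crossing_circuit_common_point:
  assumes N: "modular_matroid (restr M1 T)" and C: "circuit M C" and x0: "x0 \<in> C" "x0 \<notin> gnd M2"
    and X1: "C - gnd M2 \<in> indep M1" and X2: "C \<inter> gnd M2 \<in> indep M2"
  obtains e where "e \<in> T" "e \<in> cl M1 (C - gnd M2)" "e \<in> cl M2 (C \<inter> gnd M2)"
proof -
  let ?X1 = "C - gnd M2" and ?X2 = "C \<inter> gnd M2"
  let ?Y = "cl M2 ?X2 \<inter> T"
  have "\<exists>e. e \<in> T \<and> e \<in> cl M1 ?X1 \<and> e \<in> cl M2 ?X2"
  proof (rule ccontr)
    assume "\<nexists>e. e \<in> T \<and> e \<in> cl M1 ?X1 \<and> e \<in> cl M2 ?X2"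
    then have "cl M1 ?X1 \<inter> ?Y = {}" by blast
    moreover have Y: "flat M1 ?Y" by (rule flat1_Int_T[OF flat_cl[OF matroid2]])
    ultimately have full: "rk M1 (?X1 \<union> ?Y) = card ?X1 + rk M1 ?Y"
      using rk_Un_trace_disjoint[OF N X1 Y] by blast
    have X1_sub: "?X1 \<subseteq> gnd M1" using circuitD(1)[OF C] gnd_M by blast
    define P1 where "P1 = cl M1 ((?X1 - {x0}) \<union> ?Y)"
    define P2 where "P2 = cl M2 (cl M2 ?X2 \<union> (P1 \<inter> T))"
    have P1: "flat M1 P1" unfolding P1_def by (rule flat_cl[OF matroid1])
    have P2: "flat M2 P2" unfolding P2_def by (rule flat_cl[OF matroid2])
    have P1_sup: "(?X1 - {x0}) \<union> ?Y \<subseteq> P1"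
      unfolding P1_def by (rule subset_cl) (use X1_sub T_subset1 in blast)
    then have "cl M2 ?X2 \<inter> T \<subseteq> P1" by blast
    then have PT: "P2 \<inter> T = P1 \<inter> T" unfolding P2_def by (rule cl2_Un_Int_T[OF P1 flat_cl[OF matroid2]])
    have "?X2 \<subseteq> cl M2 ?X2" by (rule subset_cl) blast
    also have "cl M2 ?X2 \<union> (P1 \<inter> T) \<subseteq> P2"
      unfolding P2_def by (rule subset_cl) (use cl_subset_gnd[of M2 ?X2] T_subset2 in blast)
    finally have "C - {x0} \<subseteq> P1 \<union> P2" using P1_sup by blast
    then have "cl M (C - {x0}) \<subseteq> P1 \<union> P2"
      by (rule cl_subset_flat[OF matroid flat_Un[OF P1 P2 PT[symmetric]]])
    moreover have "x0 \<notin> P2" using x0(2) flat_subset_gnd[OF P2] by blast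
    ultimately have "x0 \<in> P1" using circuit_mem_cl[OF matroid C x0(1)] by blast
    then have "rk M1 (insert x0 ((?X1 - {x0}) \<union> ?Y)) = rk M1 ((?X1 - {x0}) \<union> ?Y)"
      unfolding P1_def mem_cl by blast
    moreover have "insert x0 ((?X1 - {x0}) \<union> ?Y) = ?X1 \<union> ?Y" using x0 by blast
    ultimately have "rk M1 (?X1 \<union> ?Y) = rk M1 ((?X1 - {x0}) \<union> ?Y)" by simp
    moreover have "rk M1 ((?X1 - {x0}) \<union> ?Y) \<le> rk M1 (?X1 - {x0}) + rk M1 ?Y"
      by (rule rk_Un_le[OF matroid1])
    moreover have "rk M1 (?X1 - {x0}) + 1 = card ?X1"
      using rk_indep[OF matroid1 matroidD(4)[OF matroid1 X1, of "?X1 - {x0}"]]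
        card_Suc_Diff1[OF indep_finite[OF matroid1 X1], of x0] x0 by auto
    ultimately show False using full by linarith
  qed
  then show ?thesis using that by blast
qed

lemma crossing_circuit_parts_indep:
  assumes C: "circuit M C" and n1: "\<not> C \<subseteq> gnd M1" and n2: "\<not> C \<subseteq> gnd M2"
  shows "C - gnd M2 \<in> indep M1" "C \<inter> gnd M2 \<in> indep M2"
proof -
  have "C - gnd M2 \<subset> C" "C \<inter> gnd M2 \<subset> C" using n1 n2 circuitD(1)[OF C] gnd_M by blast+
  moreover have "C - gnd M2 \<subseteq> gnd M1" using circuitD(1)[OF C] gnd_M by blast
  ultimately show "C - gnd M2 \<in> indep M1" "C \<inter> gnd M2 \<in> indep M2"
    using circuitD(3)[OF C] indep_side1 indep_side2[of "C \<inter> gnd M2"] by auto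
qed

lemma crossing_circuit_common_point_notin:
  assumes C: "circuit M C" and n1: "\<not> C \<subseteq> gnd M1" and e: "e \<in> T" "e \<in> cl M1 (C - gnd M2)"
  shows "e \<notin> C"
proof
  assume "e \<in> C"
  let ?I = "insert e (C - gnd M2)"
  obtain c0 where c0: "c0 \<in> C" "c0 \<notin> gnd M1" using n1 by blast
  have "c0 \<notin> ?I" using c0 e(1) circuitD(1)[OF C] gnd_M T_eq by blast
  moreover have "?I \<subseteq> C" using \<open>e \<in> C\<close> by blast
  ultimately have "?I \<subset> C" using c0(1) by blast
  moreover have "?I \<subseteq> gnd M1" using circuitD(1)[OF C] gnd_M e(1) T_eq by blast
  ultimately have I: "?I \<in> indep M1" using circuitD(3)[OF C] indep_side1 by blast
  then have "C - gnd M2 \<in> indep M1" using matroidD(4)[OF matroid1] by blast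
  moreover have "e \<in> gnd M1" "e \<notin> C - gnd M2" using e(1) T_eq by blast+
  ultimately show False using insert_indep_iff[OF matroid1] I e(2) by blast
qed

lemma crossing_circuit_split:
  assumes simple: "simple M" and N: "modular_matroid (restr M1 T)" and C: "circuit M C"
    and n1: "\<not> C \<subseteq> gnd M1" and n2: "\<not> C \<subseteq> gnd M2"
  shows "\<exists>C1 C2 e. circuit M C1 \<and> circuit M C2 \<and> C1 \<inter> C2 = {e} \<and> C = C1 \<union> C2 - {e}"
proof -
  let ?X1 = "C - gnd M2" and ?X2 = "C \<inter> gnd M2"
  obtain x0 where x0: "x0 \<in> C" "x0 \<notin> gnd M2" using n2 by blast
  note X1 = crossing_circuit_parts_indep(1)[OF C n1 n2]
  note X2 = crossing_circuit_parts_indep(2)[OF C n1 n2]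
  obtain e where e: "e \<in> T" "e \<in> cl M1 ?X1" "e \<in> cl M2 ?X2"
    using crossing_circuit_common_point[OF N C x0 X1 X2] .
  have "e \<notin> C" using crossing_circuit_common_point_notin[OF C n1 e(1,2)] .
  have e12: "e \<in> gnd M1" "e \<in> gnd M2" "e \<notin> ?X1" "e \<notin> ?X2" using e(1) T_eq \<open>e \<notin> C\<close> by blast+
  then have dep1: "insert e ?X1 \<notin> indep M1" using insert_indep_iff[OF matroid1 X1 e12(1,3)] e(2) by blast
  have dep2: "insert e ?X2 \<notin> indep M2" using insert_indep_iff[OF matroid2 X2 e12(2,4)] e(3) by blast
  obtain C1 where C1: "circuit M1 C1" "e \<in> C1" "C1 \<subseteq> insert e ?X1"
    using insert_dependent_circuit[OF matroid1 X1 e12(1,3) dep1] .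
  obtain C2 where C2: "circuit M2 C2" "e \<in> C2" "C2 \<subseteq> insert e ?X2"
    using insert_dependent_circuit[OF matroid2 X2 e12(2,4) dep2] .
  have circ: "circuit M C1" "circuit M C2"
    using circuit_side1[OF circuitD(1)[OF C1(1)]] circuit_side2[OF circuitD(1)[OF C2(1)]] C1(1) C2(1)
    by simp_all
  have "C1 \<noteq> C2"
  proof
    assume "C1 = C2"
    then have "C1 \<subseteq> {e}" using C1(3) C2(3) by blast
    then have "card C1 \<le> 1" using card_mono[of "{e}" C1] by simp
    moreover have "card C1 \<ge> 3" using simple circ(1) unfolding simple_def by blast
    ultimately show False by simp
  qed
  then obtain C3 where C3: "C3 \<subseteq> (C1 \<union> C2) - {e}" "circuit M C3"
    by (rule circuit_elimination[OF matroid circ]) (use C1(2) C2(2) in blast)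
  then have "C3 \<subseteq> C" using C1(3) C2(3) by blast
  then have "C3 = C" by (rule circuit_subset_eq[OF C C3(2)])
  then have "C \<subseteq> (C1 \<union> C2) - {e}" using C3(1) by blast
  then have "?X1 \<subseteq> C1" "?X2 \<subseteq> C2" using C1(3) C2(3) e12(3,4) by blast+
  then have "C1 = insert e ?X1" "C2 = insert e ?X2" using C1(2,3) C2(2,3) by blast+
  then have "C1 \<inter> C2 = {e}" "C = C1 \<union> C2 - {e}" using \<open>e \<notin> C\<close> by auto
  then show ?thesis using circ by blast
qed

lemma chordal_circuit_side1:
  assumes ch: "chordal M1" and C: "circuit M C" "4 \<le> card C" and C_sub: "C \<subseteq> gnd M1"
  shows "\<exists>C1 C2 e. circuit M C1 \<and> circuit M C2 \<and> C1 \<inter> C2 = {e} \<and> C = C1 \<union> C2 - {e}"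
proof -
  have "circuit M1 C" using circuit_side1[OF C_sub] C(1) by blast
  then obtain C1 C2 e where C12: "circuit M1 C1" "circuit M1 C2" "C1 \<inter> C2 = {e}" "C = C1 \<union> C2 - {e}"
    using ch[unfolded chordal_def, rule_format, of C] C(2) by blast
  then have "circuit M C1" "circuit M C2"
    using circuit_side1[OF circuitD(1)[OF C12(1)]] circuit_side1[OF circuitD(1)[OF C12(2)]] by simp_all
  then show ?thesis using C12(3,4) by blast
qed

lemma chordal_if_sides_chordal:
  assumes simple: "simple M" and N: "modular_matroid (restr M1 T)"
    and ch1: "chordal M1" and ch2: "chordal M2"
  shows "chordal M"
  unfolding chordal_def
proof (intro allI impI)
  fix C assume C: "circuit M C \<and> 4 \<le> card C"
  show "\<exists>C1 C2 e. circuit M C1 \<and> circuit M C2 \<and> C1 \<inter> C2 = {e} \<and> C = C1 \<union> C2 - {e}"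
  proof (cases "C \<subseteq> gnd M1")
    case True
    then show ?thesis using chordal_circuit_side1[OF ch1] C by blast
  next
    case n1: False
    show ?thesis
    proof (cases "C \<subseteq> gnd M2")
      case True
      then show ?thesis using parallel_connection.chordal_circuit_side1[OF swap ch2] C by blast
    next
      case False
      then show ?thesis using crossing_circuit_split[OF simple N] C n1 by blast
    qed
  qed
qed

end

section \<open>GF(2)-chordal matroids\<close>

lemma gf2_chordal_invariants:
  assumes "gf2_chordal M"
  shows "matroid M \<and> pg_restrictions_modular M \<and> (simple M \<longrightarrow> chordal M)"
  using assms
proof (induction rule: gf2_chordal.induct)
  case (base M)
  then show ?case
    using binary_pg_matroid binary_pg_chordal binary_pg_restr_modular_flat
    unfolding pg_restrictions_modular_def by blast
next
  case (glue M1 M2 N M)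
  let ?T = "gnd N"
  have "?T \<subseteq> gnd M2" using glue.hyps(6) by blast
  then have "modular_flat M2 ?T"
    using glue.IH(2) glue.hyps(5,9) unfolding pg_restrictions_modular_def by simp
  then interpret parallel_connection M1 M2 M ?T
    using glue.IH glue.hyps(6-10) unfolding is_gpc_def parallel_connection_def by auto
  have "modular_matroid (restr M1 ?T)" using binary_pg_modular_matroid glue.hyps(5,8) by simp
  then show ?case using matroid pg_restrictions_modular_if_sides chordal_if_sides_chordal glue.IH glue.hyps(3,4) by blast
qed

theorem lemma3p9:
  fixes M :: "'a matroid"
  assumes "simple M" and "gf2_chordal M"
  shows "chordal M"
  using gf2_chordal_invariants[OF assms(2)] assms(1) by blast

end
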